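(* Let an abstract group $Q$ act on a category $\mathcal C$, where $Q$ fits into a short exact sequence $1\to Q'\to Q\xrightarrow{\pi} Q''\to1$ (identify $Q'$ with a normal subgroup of $Q$). Suppose given an action of $Q''$ on $\mathcal C^{Q'}$, and consider two $Q$-actions on $\mathcal C^{Q'}$: (A) the canonical one induced from the $Q$-action on $\mathcal C$, and (B) the one obtained by pulling back the $Q''$-action along $\pi$. Suppose given an isomorphism of actions $\gamma$ from (A) to (B) whose restriction to $Q'$ coincides with the canonical trivialization of the canonical $Q'$-action on $\mathcal C^{Q'}$. Then there is a canonical equivalence of categories $\mathcal C^Q\simeq(\mathcal C^{Q'})^{Q''}$.
   Context: An action of an abstract group $Q$ on a category $\mathcal C$ consists of functors $q\cdot-$, natural isomorphisms $1_Q\cdot-\cong\mathrm{id}$ and $q_2\cdot(q_1\cdot -)\cong (q_2q_1)\cdot -$ satisfying the usual coherence conditions; these are written as equalities. $\mathcal C^Q$ is the category of pairs $(C,\alpha)$ with isomorphisms $\alpha_q\colon q\cdot C\to C$, $\alpha_{1_Q}$ the unit isomorphism and $\alpha_{q_2}\circ(q_2\cdot\alpha_{q_1})=\alpha_{q_2q_1}$; morphisms are maps $\phi$ in $\mathcal C$ with $\alpha_{2,q}\circ(q\cdot\phi)=\phi\circ\alpha_{1,q}$. For normal $Q'\le Q$, the canonical $Q$-action on $\mathcal C^{Q'}$ is $q\cdot(C,\alpha)=(q\cdot C,{}^q\alpha)$, ${}^q\alpha_{q'}=q\cdot\alpha_{q^{-1}q'q}\colon q'\cdot(q\cdot C)=q\cdot(q^{-1}q'q\cdot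 C)\to q\cdot C$. An isomorphism between two $Q$-actions $\cdot_A,\cdot_B$ on a category is a family of natural isomorphisms $\gamma_q\colon q\cdot_A-\to q\cdot_B-$ with $\gamma_{1_Q}$ compatible with the identifications with the identity, and $\gamma_{q_2q_1}=\gamma_{q_2}\circ(q_2\cdot_A\gamma_{q_1})$ under the identifications $(q_2q_1)\cdot_A-=q_2\cdot_A(q_1\cdot_A-)$ and $(q_2q_1)\cdot_B-=q_2\cdot_B(q_1\cdot_B-)$ (more precisely, the component at an object $X$ of $\gamma_{q_2}$ being taken at $q_1\cdot_B X$). A trivialization is an isomorphism to the trivial action ($q\cdot-=\mathrm{id}$ for all $q$). For any $Q$-action on $\mathcal C$, the canonical $Q$-action on $\mathcal C^Q$ has the canonical trivialization given on $(C,\alpha)$ by the isomorphisms $\alpha_{q_0}\colon q_0\cdot(C,\alpha)\to(C,\alpha)$ in $\mathcal C^Q$, $q_0\in Q$. *)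

theory Defs
  imports "HOL-Algebra.Algebra"
begin

record ('o, 'm) category =
  cobj :: "'o set"
  carr :: "'m set"
  cdom :: "'m \<Rightarrow> 'o"
  ccod :: "'m \<Rightarrow> 'o"
  ccomp :: "'m \<Rightarrow> 'm \<Rightarrow> 'm"   (* ccomp C g f = g o f *)
  cid :: "'o \<Rightarrow> 'm"

definition chom :: "('o, 'm, 'x) category_scheme \<Rightarrow> 'o \<Rightarrow> 'o \<Rightarrow> 'm set" where
  "chom C x y = {f \<in> carr C. cdom C f = x \<and> ccod C f = y}"

definition is_category :: "('o, 'm, 'x) category_scheme \<Rightarrow> bool" where
  "is_category C \<longleftrightarrow>
     (\<forall>f\<in>carr C. cdom C f \<in> cobj C \<and> ccod C f \<in> cobj C) \<and>
     (\<forall>x\<in>cobj C. cid C x \<in> chom C x x) \<and>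
     (\<forall>f\<in>carr C. \<forall>g\<in>carr C. ccod C f = cdom C g \<longrightarrow>
        ccomp C g f \<in> chom C (cdom C f) (ccod C g)) \<and>
     (\<forall>f\<in>carr C. ccomp C (cid C (ccod C f)) f = f \<and> ccomp C f (cid C (cdom C f)) = f) \<and>
     (\<forall>f\<in>carr C. \<forall>g\<in>carr C. \<forall>h\<in>carr C. ccod C f = cdom C g \<longrightarrow> ccod C g = cdom C h \<longrightarrow>
        ccomp C h (ccomp C g f) = ccomp C (ccomp C h g) f)"

definition cinverse :: "('o, 'm, 'x) category_scheme \<Rightarrow> 'm \<Rightarrow> 'm \<Rightarrow> bool" where
  "cinverse C f g \<longleftrightarrow> f \<in> carr C \<and> g \<in> carr C \<and> cdom C g = ccod C f \<and> ccod C g = cdom C f \<and>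
     ccomp C g f = cid C (cdom C f) \<and> ccomp C f g = cid C (ccod C f)"

definition is_iso :: "('o, 'm, 'x) category_scheme \<Rightarrow> 'm \<Rightarrow> bool" where
  "is_iso C f \<longleftrightarrow> (\<exists>g. cinverse C f g)"

definition cinv :: "('o, 'm, 'x) category_scheme \<Rightarrow> 'm \<Rightarrow> 'm" where
  "cinv C f = (SOME g. cinverse C f g)"

definition is_functor ::
  "('o1, 'm1, 'x) category_scheme \<Rightarrow> ('o2, 'm2, 'y) category_scheme \<Rightarrow>
   ('o1 \<Rightarrow> 'o2) \<Rightarrow> ('m1 \<Rightarrow> 'm2) \<Rightarrow> bool" where
  "is_functor C D Fo Fm \<longleftrightarrow>
     (\<forall>x\<in>cobj C. Fo x \<in> cobj D) \<and>
     (\<forall>f\<in>carr C. Fm f \<in> chom D (Fo (cdom C f)) (Fo (ccod C f))) \<and>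
     (\<forall>x\<in>cobj C. Fm (cid C x) = cid D (Fo x)) \<and>
     (\<forall>f\<in>carr C. \<forall>g\<in>carr C. ccod C f = cdom C g \<longrightarrow>
        Fm (ccomp C g f) = ccomp D (Fm g) (Fm f))"

definition is_nat_iso ::
  "('o1, 'm1, 'x) category_scheme \<Rightarrow> ('o2, 'm2, 'y) category_scheme \<Rightarrow>
   ('o1 \<Rightarrow> 'o2) \<Rightarrow> ('m1 \<Rightarrow> 'm2) \<Rightarrow> ('o1 \<Rightarrow> 'o2) \<Rightarrow> ('m1 \<Rightarrow> 'm2) \<Rightarrow> ('o1 \<Rightarrow> 'm2) \<Rightarrow> bool" where
  "is_nat_iso C D Fo Fm Go Gm eta \<longleftrightarrow>
     (\<forall>x\<in>cobj C. eta x \<in> chom D (Fo x) (Go x) \<and> is_iso D (eta x)) \<and>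
     (\<forall>f\<in>carr C. ccomp D (eta (ccod C f)) (Fm f) = ccomp D (Gm f) (eta (cdom C f)))"

definition cat_equivalent ::
  "('o1, 'm1, 'x) category_scheme \<Rightarrow> ('o2, 'm2, 'y) category_scheme \<Rightarrow> bool" where
  "cat_equivalent C D \<longleftrightarrow>
     (\<exists>Fo Fm Go Gm eta eps.
        is_functor C D Fo Fm \<and> is_functor D C Go Gm \<and>
        is_nat_iso C C (Go \<circ> Fo) (Gm \<circ> Fm) id id eta \<and>
        is_nat_iso D D (Fo \<circ> Go) (Fm \<circ> Gm) id id eps)"

text \<open>aobj/amor: the functors q.-; aunit Z : 1.Z -> Z; amult q2 q1 Z : q2.(q1.Z) -> (q2 q1).Z\<close>
record ('g, 'o, 'm) cat_action =
  aobj :: "'g \<Rightarrow> 'o \<Rightarrow> 'o"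
  amor :: "'g \<Rightarrow> 'm \<Rightarrow> 'm"
  aunit :: "'o \<Rightarrow> 'm"
  amult :: "'g \<Rightarrow> 'g \<Rightarrow> 'o \<Rightarrow> 'm"

definition is_action ::
  "('g, 'b) monoid_scheme \<Rightarrow> ('o, 'm, 'x) category_scheme \<Rightarrow> ('g, 'o, 'm) cat_action \<Rightarrow> bool" where
  "is_action G C A \<longleftrightarrow>
     (\<forall>q\<in>carrier G. is_functor C C (aobj A q) (amor A q)) \<and>
     is_nat_iso C C (aobj A (\<one>\<^bsub>G\<^esub>)) (amor A (\<one>\<^bsub>G\<^esub>)) id id (aunit A) \<and>
     (\<forall>q2\<in>carrier G. \<forall>q1\<in>carrier G.
        is_nat_iso C C (aobj A q2 \<circ> aobj A q1) (amor A q2 \<circ> amor A q1)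
          (aobj A (q2 \<otimes>\<^bsub>G\<^esub> q1)) (amor A (q2 \<otimes>\<^bsub>G\<^esub> q1)) (amult A q2 q1)) \<and>
     (\<forall>q3\<in>carrier G. \<forall>q2\<in>carrier G. \<forall>q1\<in>carrier G. \<forall>x\<in>cobj C.
        ccomp C (amult A q3 (q2 \<otimes>\<^bsub>G\<^esub> q1) x) (amor A q3 (amult A q2 q1 x)) =
        ccomp C (amult A (q3 \<otimes>\<^bsub>G\<^esub> q2) q1 x) (amult A q3 q2 (aobj A q1 x))) \<and>
     (\<forall>q\<in>carrier G. \<forall>x\<in>cobj C.
        amult A (\<one>\<^bsub>G\<^esub>) q x = aunit A (aobj A q x) \<and>
        amult A q (\<one>\<^bsub>G\<^esub>) x = amor A q (aunit A x))"

type_synonym ('g, 'o, 'm) eqv_ob = "'o \<times> ('g \<Rightarrow> 'm)"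
type_synonym ('g, 'o, 'm) eqv_ar = "('g, 'o, 'm) eqv_ob \<times> ('g, 'o, 'm) eqv_ob \<times> 'm"

definition eqv_obj ::
  "('g, 'b) monoid_scheme \<Rightarrow> 'g set \<Rightarrow> ('o, 'm, 'x) category_scheme \<Rightarrow> ('g, 'o, 'm) cat_action \<Rightarrow>
   ('g, 'o, 'm) eqv_ob \<Rightarrow> bool" where
  "eqv_obj G H C A Xa \<longleftrightarrow>
     (let Z = fst Xa; \<alpha> = snd Xa in
       Z \<in> cobj C \<and> \<alpha> \<in> extensional H \<and>
       (\<forall>q\<in>H. \<alpha> q \<in> chom C (aobj A q Z) Z \<and> is_iso C (\<alpha> q)) \<and>
       \<alpha> (\<one>\<^bsub>G\<^esub>) = aunit A Z \<and>
       (\<forall>q2\<in>H. \<forall>q1\<in>H.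
          ccomp C (\<alpha> q2) (amor A q2 (\<alpha> q1)) = ccomp C (\<alpha> (q2 \<otimes>\<^bsub>G\<^esub> q1)) (amult A q2 q1 Z)))"

definition eqv_cat ::
  "('g, 'b) monoid_scheme \<Rightarrow> 'g set \<Rightarrow> ('o, 'm, 'x) category_scheme \<Rightarrow> ('g, 'o, 'm) cat_action \<Rightarrow>
   (('g, 'o, 'm) eqv_ob, ('g, 'o, 'm) eqv_ar) category" where
  "eqv_cat G H C A =
     \<lparr> cobj = {Xa. eqv_obj G H C A Xa},
       carr = {(Xa, Ya, \<phi>). eqv_obj G H C A Xa \<and> eqv_obj G H C A Ya \<and>
                 \<phi> \<in> chom C (fst Xa) (fst Ya) \<and>
                 (\<forall>q\<in>H. ccomp C (snd Ya q) (amor A q \<phi>) = ccomp C \<phi> (snd Xa q))},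
       cdom = (\<lambda>f. fst f),
       ccod = (\<lambda>f. fst (snd f)),
       ccomp = (\<lambda>g f. (fst f, fst (snd g), ccomp C (snd (snd g)) (snd (snd f)))),
       cid = (\<lambda>Xa. (Xa, Xa, cid C (fst Xa))) \<rparr>"

text \<open>q.(C,alpha) = (q.C, alpha') where alpha'_{q'} is
  q'.(q.C) -> (q'q).C = (q (q^-1 q' q)).C -> q.((q^-1 q' q).C) -> q.C,
  the last map being q.alpha_{q^-1 q' q}.\<close>
definition canon_obj ::
  "('g, 'b) monoid_scheme \<Rightarrow> 'g set \<Rightarrow> ('o, 'm, 'x) category_scheme \<Rightarrow> ('g, 'o, 'm) cat_action \<Rightarrow>
   'g \<Rightarrow> ('g, 'o, 'm) eqv_ob \<Rightarrow> ('g, 'o, 'm) eqv_ob" where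
  "canon_obj G N C A q Xa =
     (aobj A q (fst Xa),
      (\<lambda>q'. if q' \<in> N then
          ccomp C (amor A q (snd Xa (inv\<^bsub>G\<^esub> q \<otimes>\<^bsub>G\<^esub> q' \<otimes>\<^bsub>G\<^esub> q)))
            (ccomp C (cinv C (amult A q (inv\<^bsub>G\<^esub> q \<otimes>\<^bsub>G\<^esub> q' \<otimes>\<^bsub>G\<^esub> q) (fst Xa)))
               (amult A q' q (fst Xa)))
        else undefined))"

definition canon_action ::
  "('g, 'b) monoid_scheme \<Rightarrow> 'g set \<Rightarrow> ('o, 'm, 'x) category_scheme \<Rightarrow> ('g, 'o, 'm) cat_action \<Rightarrow>
   ('g, ('g, 'o, 'm) eqv_ob, ('g, 'o, 'm) eqv_ar) cat_action" where
  "canon_action G N C A =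
     \<lparr> aobj = canon_obj G N C A,
       amor = (\<lambda>q f. (canon_obj G N C A q (fst f), canon_obj G N C A q (fst (snd f)),
                      amor A q (snd (snd f)))),
       aunit = (\<lambda>Xa. (canon_obj G N C A (\<one>\<^bsub>G\<^esub>) Xa, Xa, aunit A (fst Xa))),
       amult = (\<lambda>q2 q1 Xa. (canon_obj G N C A q2 (canon_obj G N C A q1 Xa),
                           canon_obj G N C A (q2 \<otimes>\<^bsub>G\<^esub> q1) Xa, amult A q2 q1 (fst Xa))) \<rparr>"

definition pullback_action :: "('g \<Rightarrow> 'h) \<Rightarrow> ('h, 'o, 'm) cat_action \<Rightarrow> ('g, 'o, 'm) cat_action" where
  "pullback_action \<pi> B =
     \<lparr> aobj = (\<lambda>q. aobj B (\<pi> q)), amor = (\<lambda>q. amor B (\<pi> q)), aunit = aunit B,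
       amult = (\<lambda>q2 q1. amult B (\<pi> q2) (\<pi> q1)) \<rparr>"

definition is_action_iso ::
  "('g, 'b) monoid_scheme \<Rightarrow> ('o, 'm, 'x) category_scheme \<Rightarrow> ('g, 'o, 'm) cat_action \<Rightarrow>
   ('g, 'o, 'm) cat_action \<Rightarrow> ('g \<Rightarrow> 'o \<Rightarrow> 'm) \<Rightarrow> bool" where
  "is_action_iso G D A B \<gamma> \<longleftrightarrow>
     (\<forall>q\<in>carrier G. is_nat_iso D D (aobj A q) (amor A q) (aobj B q) (amor B q) (\<gamma> q)) \<and>
     (\<forall>Z\<in>cobj D. ccomp D (aunit B Z) (\<gamma> (\<one>\<^bsub>G\<^esub>) Z) = aunit A Z) \<and>
     (\<forall>q2\<in>carrier G. \<forall>q1\<in>carrier G. \<forall>Z\<in>cobj D.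
        ccomp D (\<gamma> (q2 \<otimes>\<^bsub>G\<^esub> q1) Z) (amult A q2 q1 Z) =
        ccomp D (amult B q2 q1 Z) (ccomp D (\<gamma> q2 (aobj B q1 Z)) (amor A q2 (\<gamma> q1 Z))))"

text \<open>The restriction of gamma to N coincides with the canonical trivialization:
  for q0 in N the action (B) is q0.Z = 1''.Z, identified with Z via the unit
  isomorphism of the G''-action; after this identification gamma q0 (C,alpha)
  must be alpha q0 : q0.(C,alpha) -> (C,alpha).\<close>
definition restricts_to_canonical_trivialization ::
  "('g, 'b) monoid_scheme \<Rightarrow> 'g set \<Rightarrow> ('o, 'm, 'x) category_scheme \<Rightarrow> ('g, 'o, 'm) cat_action \<Rightarrow>
   ('h, ('g, 'o, 'm) eqv_ob, ('g, 'o, 'm) eqv_ar) cat_action \<Rightarrow>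
   ('g \<Rightarrow> ('g, 'o, 'm) eqv_ob \<Rightarrow> ('g, 'o, 'm) eqv_ar) \<Rightarrow> bool" where
  "restricts_to_canonical_trivialization G N C A B \<gamma> \<longleftrightarrow>
     (\<forall>q0\<in>N. \<forall>Xa\<in>cobj (eqv_cat G N C A).
        ccomp (eqv_cat G N C A) (aunit B Xa) (\<gamma> q0 Xa) = (canon_obj G N C A q0 Xa, Xa, snd Xa q0))"

end

(*
  An object of C^Q is an object X of C with isomorphisms alpha_q : q.X -> X. Restricting alpha to Q'
  gives an object U of C^Q', and for h in Q'' the composite alpha_q o gamma_q(U)^-1 : h.U -> U does
  not depend on the choice of q over h: two choices differ by some n in Q', and on Q' the
  isomorphism gamma is the structure map of U itself. These composites form a Q''-structure on U.
  Conversely, a Q''-structure beta on U gives alpha_q = beta_(pi q) o gamma_q(U). Since gamma is an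
  isomorphism of actions, the unit, cocycle and naturality conditions on both sides correspond
  under this translation, so the two constructions are mutually inverse functors which do not
  change the underlying objects and morphisms of C.
*)

theory Submission
  imports Defs
begin

locale cat =
  fixes C :: "('o, 'm, 'x) category_scheme"
  assumes is_cat: "is_category C"
begin

lemma hom_iff: "f \<in> chom C x y \<longleftrightarrow> f \<in> carr C \<and> cdom C f = x \<and> ccod C f = y"
  by (simp add: chom_def)

lemma dom_obj [simp]: "f \<in> carr C \<Longrightarrow> cdom C f \<in> cobj C"
  and cod_obj [simp]: "f \<in> carr C \<Longrightarrow> ccod C f \<in> cobj C"
  using is_cat by (simp_all add: is_category_def)

lemma id_carr [simp]: "x \<in> cobj C \<Longrightarrow> cid C x \<in> carr C"
  and id_dom [simp]: "x \<in> cobj C \<Longrightarrow> cdom C (cid C x) = x"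
  and id_cod [simp]: "x \<in> cobj C \<Longrightarrow> ccod C (cid C x) = x"
  using is_cat by (auto simp: is_category_def chom_def)

lemma comp_carr [simp]: "f \<in> carr C \<Longrightarrow> g \<in> carr C \<Longrightarrow> ccod C f = cdom C g \<Longrightarrow> ccomp C g f \<in> carr C"
  and comp_dom [simp]: "f \<in> carr C \<Longrightarrow> g \<in> carr C \<Longrightarrow> ccod C f = cdom C g \<Longrightarrow> cdom C (ccomp C g f) = cdom C f"
  and comp_cod [simp]: "f \<in> carr C \<Longrightarrow> g \<in> carr C \<Longrightarrow> ccod C f = cdom C g \<Longrightarrow> ccod C (ccomp C g f) = ccod C g"
  using is_cat by (auto simp: is_category_def chom_def)

lemma id_left [simp]: "f \<in> carr C \<Longrightarrow> ccod C f = y \<Longrightarrow> ccomp C (cid C y) f = f"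
  and id_right [simp]: "f \<in> carr C \<Longrightarrow> cdom C f = x \<Longrightarrow> ccomp C f (cid C x) = f"
  using is_cat by (auto simp: is_category_def)

lemma comp_assoc [simp]:
  "f \<in> carr C \<Longrightarrow> g \<in> carr C \<Longrightarrow> h \<in> carr C \<Longrightarrow> ccod C f = cdom C g \<Longrightarrow> ccod C g = cdom C h \<Longrightarrow>
   ccomp C h (ccomp C g f) = ccomp C (ccomp C h g) f"
  using is_cat by (auto simp: is_category_def)

lemma comp_hom: "f \<in> chom C x y \<Longrightarrow> g \<in> chom C y z \<Longrightarrow> ccomp C g f \<in> chom C x z"
  by (simp add: hom_iff)

lemma cinverse_sym: "cinverse C f g \<Longrightarrow> cinverse C g f"
  by (auto simp: cinverse_def)

lemma cinverse_unique:
  assumes "cinverse C f g" and "cinverse C f g'"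
  shows "g = g'"
proof -
  have "g = ccomp C g (ccomp C f g')" using assms by (simp add: cinverse_def)
  also have "\<dots> = ccomp C (ccomp C g f) g'" using assms unfolding cinverse_def by (metis comp_assoc)
  also have "\<dots> = g'" using assms unfolding cinverse_def by (metis id_left)
  finally show ?thesis .
qed

lemma cinv_inverse: "is_iso C f \<Longrightarrow> cinverse C f (cinv C f)"
  unfolding is_iso_def cinv_def by (rule someI_ex)

lemma cinv_eq: "cinverse C f g \<Longrightarrow> cinv C f = g"
  by (meson cinverse_unique cinv_inverse is_iso_def)

lemma cinv_carr [simp]: "is_iso C f \<Longrightarrow> cinv C f \<in> carr C"
  and cinv_dom [simp]: "is_iso C f \<Longrightarrow> cdom C (cinv C f) = ccod C f"
  and cinv_cod [simp]: "is_iso C f \<Longrightarrow> ccod C (cinv C f) = cdom C f"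
  and cinv_left [simp]: "is_iso C f \<Longrightarrow> ccomp C (cinv C f) f = cid C (cdom C f)"
  and cinv_right [simp]: "is_iso C f \<Longrightarrow> ccomp C f (cinv C f) = cid C (ccod C f)"
  using cinv_inverse[of f] unfolding cinverse_def by blast+

lemma iso_carr: "is_iso C f \<Longrightarrow> f \<in> carr C"
  unfolding is_iso_def cinverse_def by blast

lemma comp_cinv_cancel_left [simp]:
  assumes "is_iso C f" "h \<in> carr C" "cdom C h = cdom C f"
  shows "ccomp C (ccomp C h (cinv C f)) f = h"
proof -
  have "ccomp C (ccomp C h (cinv C f)) f = ccomp C h (ccomp C (cinv C f) f)"
    using assms iso_carr by (simp del: cinv_left)
  then show ?thesis using assms iso_carr by simp
qed

lemma comp_cinv_cancel_right [simp]:
  assumes "is_iso C f" "h \<in> carr C" "cdom C h = ccod C f"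
  shows "ccomp C (ccomp C h f) (cinv C f) = h"
proof -
  have "ccomp C (ccomp C h f) (cinv C f) = ccomp C h (ccomp C f (cinv C f))"
    using assms iso_carr by (simp del: cinv_right)
  then show ?thesis using assms iso_carr by simp
qed

lemma iso_cinv: "is_iso C f \<Longrightarrow> is_iso C (cinv C f)"
  by (meson cinverse_sym cinv_inverse is_iso_def)

lemma id_iso: "x \<in> cobj C \<Longrightarrow> is_iso C (cid C x)"
  unfolding is_iso_def cinverse_def by (rule exI[of _ "cid C x"]) simp

lemma iso_comp:
  assumes f: "is_iso C f" and g: "is_iso C g" and fg: "ccod C f = cdom C g"
  shows "is_iso C (ccomp C g f)"
proof -
  note carr = iso_carr[OF f] iso_carr[OF g]
  have "ccomp C (ccomp C (cinv C f) (cinv C g)) (ccomp C g f) =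
        ccomp C (ccomp C (cinv C f) (ccomp C (cinv C g) g)) f"
    using assms carr by (simp del: cinv_left cinv_right comp_cinv_cancel_left comp_cinv_cancel_right)
  moreover have "ccomp C (ccomp C g f) (ccomp C (cinv C f) (cinv C g)) =
        ccomp C (ccomp C g (ccomp C f (cinv C f))) (cinv C g)"
    using assms carr by (simp del: cinv_left cinv_right comp_cinv_cancel_left comp_cinv_cancel_right)
  ultimately have "cinverse C (ccomp C g f) (ccomp C (cinv C f) (cinv C g))"
    unfolding cinverse_def using assms carr by (simp del: comp_assoc)
  then show ?thesis by (auto simp: is_iso_def)
qed

lemma iso_cancel_right:
  assumes "is_iso C i" "f \<in> carr C" "g \<in> carr C" "cdom C f = ccod C i" "cdom C g = ccod C i"
  shows "ccomp C f i = ccomp C g i \<longleftrightarrow> f = g"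
  using assms comp_cinv_cancel_right by metis

end

lemma functor_hom:
  "is_functor C D Fo Fm \<Longrightarrow> f \<in> carr C \<Longrightarrow>
   Fm f \<in> carr D \<and> cdom D (Fm f) = Fo (cdom C f) \<and> ccod D (Fm f) = Fo (ccod C f)"
  by (simp add: is_functor_def chom_def)

lemma functor_comp:
  "is_functor C D Fo Fm \<Longrightarrow> f \<in> carr C \<Longrightarrow> g \<in> carr C \<Longrightarrow> ccod C f = cdom C g \<Longrightarrow>
   Fm (ccomp C g f) = ccomp D (Fm g) (Fm f)"
  by (simp add: is_functor_def)

lemma functor_id: "is_functor C D Fo Fm \<Longrightarrow> x \<in> cobj C \<Longrightarrow> Fm (cid C x) = cid D (Fo x)"
  by (simp add: is_functor_def)

lemma functor_hom_hom: "is_functor C D Fo Fm \<Longrightarrow> f \<in> chom C x y \<Longrightarrow> Fm f \<in> chom D (Fo x) (Fo y)"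
  unfolding is_functor_def chom_def by auto

lemma functor_obj: "is_functor C D Fo Fm \<Longrightarrow> x \<in> cobj C \<Longrightarrow> Fo x \<in> cobj D"
  by (simp add: is_functor_def)

lemma (in cat) functor_cinverse:
  assumes F: "is_functor C D Fo Fm" and f: "is_iso C f"
  shows "cinverse D (Fm f) (Fm (cinv C f))"
proof -
  note fc = iso_carr[OF f]
  have "ccomp D (Fm (cinv C f)) (Fm f) = cid D (Fo (cdom C f))"
    using F f fc by (simp add: functor_comp[symmetric] functor_id)
  moreover have "ccomp D (Fm f) (Fm (cinv C f)) = cid D (Fo (ccod C f))"
    using F f fc by (simp add: functor_comp[symmetric] functor_id)
  ultimately show ?thesis
    using F f fc functor_hom[OF F] unfolding cinverse_def by simp
qed

lemma cat_equivalent_if_inverse_functors: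
  assumes "is_category C" "is_category D"
    and "is_functor C D Fo Fm" "is_functor D C Go Gm"
    and "\<And>x. x \<in> cobj C \<Longrightarrow> Go (Fo x) = x" "\<And>f. f \<in> carr C \<Longrightarrow> Gm (Fm f) = f"
    and "\<And>y. y \<in> cobj D \<Longrightarrow> Fo (Go y) = y" "\<And>g. g \<in> carr D \<Longrightarrow> Fm (Gm g) = g"
  shows "cat_equivalent C D"
proof -
  interpret C: cat C by (rule cat.intro) fact
  interpret D: cat D by (rule cat.intro) fact
  have "is_nat_iso C C (Go \<circ> Fo) (Gm \<circ> Fm) id id (cid C)"
    "is_nat_iso D D (Fo \<circ> Go) (Fm \<circ> Gm) id id (cid D)"
    using assms by (simp_all add: is_nat_iso_def C.hom_iff D.hom_iff C.id_iso D.id_iso)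
  then show ?thesis unfolding cat_equivalent_def using assms(3,4) by blast
qed

abbreviation umor :: "'a \<times> 'b \<times> 'c \<Rightarrow> 'c" where
  "umor f \<equiv> snd (snd f)"

lemma eqv_cat_simps [simp]:
  "cobj (eqv_cat G H C A) = {Xa. eqv_obj G H C A Xa}"
  "cdom (eqv_cat G H C A) = fst"
  "ccod (eqv_cat G H C A) = (\<lambda>f. fst (snd f))"
  "ccomp (eqv_cat G H C A) g f = (fst f, fst (snd g), ccomp C (umor g) (umor f))"
  "cid (eqv_cat G H C A) U = (U, U, cid C (fst U))"
  by (simp_all add: eqv_cat_def)

lemma eqv_obj_iff:
  "eqv_obj G H C A Xa \<longleftrightarrow>
     fst Xa \<in> cobj C \<and> snd Xa \<in> extensional H \<and>
     (\<forall>q\<in>H. snd Xa q \<in> chom C (aobj A q (fst Xa)) (fst Xa) \<and> is_iso C (snd Xa q)) \<and>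
     snd Xa (\<one>\<^bsub>G\<^esub>) = aunit A (fst Xa) \<and>
     (\<forall>q2\<in>H. \<forall>q1\<in>H. ccomp C (snd Xa q2) (amor A q2 (snd Xa q1)) =
                      ccomp C (snd Xa (q2 \<otimes>\<^bsub>G\<^esub> q1)) (amult A q2 q1 (fst Xa)))"
  by (simp add: eqv_obj_def Let_def)

lemma eqv_carr_iff:
  "f \<in> carr (eqv_cat G H C A) \<longleftrightarrow>
     eqv_obj G H C A (fst f) \<and> eqv_obj G H C A (fst (snd f)) \<and>
     umor f \<in> chom C (fst (fst f)) (fst (fst (snd f))) \<and>
     (\<forall>q\<in>H. ccomp C (snd (fst (snd f)) q) (amor A q (umor f)) = ccomp C (umor f) (snd (fst f) q))"
  by (cases f) (auto simp: eqv_cat_def)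

locale eqv_category = cat C for C :: "('o, 'm, 'x) category_scheme" +
  fixes G :: "('g, 'b) monoid_scheme" and H :: "'g set" and A :: "('g, 'o, 'm) cat_action"
  assumes action_functor: "q \<in> H \<Longrightarrow> is_functor C C (aobj A q) (amor A q)"
begin

abbreviation "E \<equiv> eqv_cat G H C A"

lemma amor_carr [simp]: "q \<in> H \<Longrightarrow> f \<in> carr C \<Longrightarrow> amor A q f \<in> carr C"
  and amor_dom [simp]: "q \<in> H \<Longrightarrow> f \<in> carr C \<Longrightarrow> cdom C (amor A q f) = aobj A q (cdom C f)"
  and amor_cod [simp]: "q \<in> H \<Longrightarrow> f \<in> carr C \<Longrightarrow> ccod C (amor A q f) = aobj A q (ccod C f)"
  using functor_hom[OF action_functor] by auto

lemma amor_comp [simp]: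
  "q \<in> H \<Longrightarrow> f \<in> carr C \<Longrightarrow> g \<in> carr C \<Longrightarrow> ccod C f = cdom C g \<Longrightarrow>
   amor A q (ccomp C g f) = ccomp C (amor A q g) (amor A q f)"
  using functor_comp[OF action_functor] by auto

lemma amor_id [simp]: "q \<in> H \<Longrightarrow> x \<in> cobj C \<Longrightarrow> amor A q (cid C x) = cid C (aobj A q x)"
  using functor_id[OF action_functor] by auto

lemma aobj_obj [simp]: "q \<in> H \<Longrightarrow> x \<in> cobj C \<Longrightarrow> aobj A q x \<in> cobj C"
  using functor_obj[OF action_functor] by auto

lemma amor_hom: "q \<in> H \<Longrightarrow> f \<in> chom C x y \<Longrightarrow> amor A q f \<in> chom C (aobj A q x) (aobj A q y)"
  by (rule functor_hom_hom[OF action_functor])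

lemma amor_iso:
  assumes "q \<in> H" "is_iso C f"
  shows "is_iso C (amor A q f)"
  using functor_cinverse[OF action_functor[OF assms(1)] assms(2)] unfolding is_iso_def by blast

lemma amor_cinv [simp]: "q \<in> H \<Longrightarrow> is_iso C f \<Longrightarrow> amor A q (cinv C f) = cinv C (amor A q f)"
  by (intro cinv_eq[symmetric] functor_cinverse[OF action_functor])

lemma eqv_comp_compatible:
  assumes f: "f \<in> carr E" and g: "g \<in> carr E" and fg: "fst (snd f) = fst g" and q: "q \<in> H"
  shows "ccomp C (snd (fst (snd g)) q) (amor A q (ccomp C (umor g) (umor f))) =
         ccomp C (ccomp C (umor g) (umor f)) (snd (fst f) q)"
proof -
  let ?\<alpha> = "snd (fst f) q" and ?\<beta> = "snd (fst g) q" and ?\<delta> = "snd (fst (snd g)) q"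
  have maps: "?\<alpha> \<in> chom C (aobj A q (fst (fst f))) (fst (fst f))"
    "?\<beta> \<in> chom C (aobj A q (fst (fst g))) (fst (fst g))"
    "?\<delta> \<in> chom C (aobj A q (fst (fst (snd g)))) (fst (fst (snd g)))"
    and compat: "ccomp C ?\<beta> (amor A q (umor f)) = ccomp C (umor f) ?\<alpha>"
      "ccomp C ?\<delta> (amor A q (umor g)) = ccomp C (umor g) ?\<beta>"
    using f g fg q by (auto simp: eqv_carr_iff eqv_obj_iff)
  have arrs: "umor f \<in> chom C (fst (fst f)) (fst (fst g))"
    "umor g \<in> chom C (fst (fst g)) (fst (fst (snd g)))"
    using f g fg by (auto simp: eqv_carr_iff)
  have "ccomp C ?\<delta> (amor A q (ccomp C (umor g) (umor f))) =
        ccomp C (ccomp C ?\<delta> (amor A q (umor g))) (amor A q (umor f))"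
    using maps arrs q by (simp add: hom_iff)
  also have "\<dots> = ccomp C (umor g) (ccomp C ?\<beta> (amor A q (umor f)))"
    using maps arrs q by (simp add: compat(2) hom_iff)
  also have "\<dots> = ccomp C (ccomp C (umor g) (umor f)) ?\<alpha>"
    using maps arrs q by (simp add: compat(1) hom_iff)
  finally show ?thesis .
qed

lemma eqv_cat_is_category: "is_category E"
proof -
  have "cid E x \<in> chom E x x" if "x \<in> cobj E" for x
    using that by (auto simp: chom_def eqv_carr_iff eqv_obj_iff hom_iff)
  moreover have "ccomp E g f \<in> chom E (cdom E f) (ccod E g)"
    if "f \<in> carr E" "g \<in> carr E" "ccod E f = cdom E g" for f g
    using that eqv_comp_compatible[of f g] by (auto simp: chom_def eqv_carr_iff hom_iff)
  ultimately show ?thesis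
    unfolding is_category_def by (auto simp: eqv_carr_iff hom_iff)
qed

lemma eqv_arrow_eq_iff: "f \<in> chom E U Y \<Longrightarrow> g \<in> chom E U Y \<Longrightarrow> f = g \<longleftrightarrow> umor f = umor g"
  by (cases f, cases g) (auto simp: chom_def)

lemma eqv_cinverse_umor: "cinverse E f g \<Longrightarrow> cinverse C (umor f) (umor g)"
  by (auto simp: cinverse_def eqv_carr_iff hom_iff)

lemma eqv_iso_imp_iso: "is_iso E f \<Longrightarrow> is_iso C (umor f)"
  unfolding is_iso_def by (metis eqv_cinverse_umor)

lemma eqv_cinv:
  assumes "is_iso E f"
  shows "cinv E f = (fst (snd f), fst f, cinv C (umor f))"
proof -
  interpret E: cat E by (rule cat.intro, rule eqv_cat_is_category)
  obtain g where g: "cinverse E f g" using assms by (auto simp: is_iso_def)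
  then have "cinv C (umor f) = umor g" by (intro cinv_eq eqv_cinverse_umor)
  moreover have "fst g = fst (snd f)" "fst (snd g) = fst f"
    using g by (auto simp: cinverse_def)
  ultimately have "g = (fst (snd f), fst f, cinv C (umor f))" by (cases g) auto
  then show ?thesis using E.cinv_eq[OF g] by simp
qed

lemma iso_imp_eqv_iso:
  assumes f: "f \<in> carr E" and i: "is_iso C (umor f)"
  shows "is_iso E f"
proof -
  obtain U Y \<phi> where f_eq: "f = (U, Y, \<phi>)" by (cases f)
  have U: "eqv_obj G H C A U" and Y: "eqv_obj G H C A Y" and \<phi>: "\<phi> \<in> chom C (fst U) (fst Y)"
    and compat: "\<And>q. q \<in> H \<Longrightarrow> ccomp C (snd Y q) (amor A q \<phi>) = ccomp C \<phi> (snd U q)"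
    using f f_eq by (auto simp: eqv_carr_iff)
  have i\<phi>: "is_iso C \<phi>" using i f_eq by simp
  have "ccomp C (snd U q) (amor A q (cinv C \<phi>)) = ccomp C (cinv C \<phi>) (snd Y q)" if q: "q \<in> H" for q
  proof -
    have maps: "snd U q \<in> chom C (aobj A q (fst U)) (fst U)" "snd Y q \<in> chom C (aobj A q (fst Y)) (fst Y)"
      using U Y q by (auto simp: eqv_obj_iff)
    have "ccomp C (ccomp C (snd U q) (amor A q (cinv C \<phi>))) (amor A q \<phi>) = snd U q"
      using maps \<phi> i\<phi> q by (simp add: hom_iff amor_iso)
    also have "\<dots> = ccomp C (cinv C \<phi>) (ccomp C \<phi> (snd U q))"
      using maps \<phi> i\<phi> by (simp add: hom_iff)
    also have "\<dots> = ccomp C (ccomp C (cinv C \<phi>) (snd Y q)) (amor A q \<phi>)"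
      using maps \<phi> i\<phi> q by (simp add: compat[symmetric] hom_iff)
    finally show ?thesis
      using maps \<phi> i\<phi> q by (subst (asm) iso_cancel_right) (auto simp: hom_iff amor_iso)
  qed
  then have "(Y, U, cinv C \<phi>) \<in> carr E" using U Y \<phi> i\<phi> by (auto simp: eqv_carr_iff hom_iff)
  then have "cinverse E f (Y, U, cinv C \<phi>)" using f f_eq \<phi> i\<phi> by (auto simp: cinverse_def hom_iff)
  then show ?thesis unfolding is_iso_def by blast
qed

end

locale extension_action =
  fixes G :: "('g, 'b) monoid_scheme" and G'' :: "('h, 'c) monoid_scheme"
    and \<pi> :: "'g \<Rightarrow> 'h" and N :: "'g set"
    and C :: "('o, 'm) category" and A :: "('g, 'o, 'm) cat_action"
    and B :: "('h, ('g, 'o, 'm) eqv_ob, ('g, 'o, 'm) eqv_ar) cat_action"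
    and \<gamma> :: "'g \<Rightarrow> ('g, 'o, 'm) eqv_ob \<Rightarrow> ('g, 'o, 'm) eqv_ar"
  assumes group_G: "group G" and group_G'': "group G''"
    and pi_hom: "\<pi> \<in> hom G G''" and pi_surj: "\<pi> ` carrier G = carrier G''"
    and N_normal: "N \<lhd> G" and kernel_pi: "kernel G G'' \<pi> = N"
    and category_C: "is_category C"
    and action_A: "is_action G C A"
    and action_B: "is_action G'' (eqv_cat G N C A) B"
    and gamma_iso: "is_action_iso G (eqv_cat G N C A) (canon_action G N C A) (pullback_action \<pi> B) \<gamma>"
    and gamma_trivialization: "restricts_to_canonical_trivialization G N C A B \<gamma>"
begin

abbreviation "D \<equiv> eqv_cat G N C A"

abbreviation "CG_obj Xa \<equiv> eqv_obj G (carrier G) C A Xa"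

abbreviation "DG_obj Xb \<equiv> eqv_obj G'' (carrier G'') D B Xb"

lemma in_N_iff: "n \<in> N \<longleftrightarrow> n \<in> carrier G \<and> \<pi> n = \<one>\<^bsub>G''\<^esub>"
  using kernel_pi by (auto simp: kernel_def)

lemma N_carrier [simp]: "n \<in> N \<Longrightarrow> n \<in> carrier G"
  by (simp add: in_N_iff)

lemma pi_carrier [simp]: "q \<in> carrier G \<Longrightarrow> \<pi> q \<in> carrier G''"
  using pi_hom by (auto simp: hom_def)

lemma pi_mult [simp]: "q1 \<in> carrier G \<Longrightarrow> q2 \<in> carrier G \<Longrightarrow> \<pi> (q1 \<otimes>\<^bsub>G\<^esub> q2) = \<pi> q1 \<otimes>\<^bsub>G''\<^esub> \<pi> q2"
  using pi_hom by (simp add: hom_mult)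

lemma group_hom_pi: "group_hom G G'' \<pi>"
  using group_G group_G'' pi_hom by (simp add: group_hom_def group_hom_axioms_def)

lemma pi_one [simp]: "\<pi> \<one>\<^bsub>G\<^esub> = \<one>\<^bsub>G''\<^esub>"
  using group_hom_pi by (rule group_hom.hom_one)

lemma one_G'' [simp]: "\<one>\<^bsub>G''\<^esub> \<in> carrier G''"
  using group_G'' by (simp add: group.is_monoid monoid.one_closed)

lemma mult_G'' [simp]: "h1 \<in> carrier G'' \<Longrightarrow> h2 \<in> carrier G'' \<Longrightarrow> h1 \<otimes>\<^bsub>G''\<^esub> h2 \<in> carrier G''"
  using group_G'' by (simp add: group.is_monoid monoid.m_closed)

lemma one_N [simp]: "\<one>\<^bsub>G\<^esub> \<in> N"
  using N_normal normal_imp_subgroup subgroup.one_closed by blast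

lemma one_G [simp]: "\<one>\<^bsub>G\<^esub> \<in> carrier G"
  using group_G by (simp add: group.is_monoid monoid.one_closed)

lemma mult_G [simp]: "q1 \<in> carrier G \<Longrightarrow> q2 \<in> carrier G \<Longrightarrow> q1 \<otimes>\<^bsub>G\<^esub> q2 \<in> carrier G"
  using group_G by (simp add: group.is_monoid monoid.m_closed)

lemma conj_in_N: "q \<in> carrier G \<Longrightarrow> n \<in> N \<Longrightarrow> inv\<^bsub>G\<^esub> q \<otimes>\<^bsub>G\<^esub> n \<otimes>\<^bsub>G\<^esub> q \<in> N"
  by (rule normal.inv_op_closed1[OF N_normal])

lemma same_image_in_N:
  assumes "q1 \<in> carrier G" "q2 \<in> carrier G" "\<pi> q1 = \<pi> q2"
  shows "q2 \<otimes>\<^bsub>G\<^esub> inv\<^bsub>G\<^esub> q1 \<in> N"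
proof -
  interpret G: group G by (rule group_G)
  have "\<pi> (q2 \<otimes>\<^bsub>G\<^esub> inv\<^bsub>G\<^esub> q1) = \<pi> q2 \<otimes>\<^bsub>G''\<^esub> inv\<^bsub>G''\<^esub> \<pi> q1"
    using assms group_hom.hom_inv[OF group_hom_pi] by simp
  then show ?thesis
    using assms group.r_inv[OF group_G''] by (simp add: in_N_iff)
qed

definition pi_section :: "'h \<Rightarrow> 'g" where
  "pi_section h = (SOME q. q \<in> carrier G \<and> \<pi> q = h)"

lemma pi_section:
  assumes "h \<in> carrier G''"
  shows "pi_section h \<in> carrier G \<and> \<pi> (pi_section h) = h"
proof -
  have "\<exists>q. q \<in> carrier G \<and> \<pi> q = h"
    using assms pi_surj by (metis imageE)
  then show ?thesis unfolding pi_section_def by (rule someI_ex)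
qed

lemma pi_section_carrier [simp]: "h \<in> carrier G'' \<Longrightarrow> pi_section h \<in> carrier G"
  and pi_pi_section [simp]: "h \<in> carrier G'' \<Longrightarrow> \<pi> (pi_section h) = h"
  using pi_section by auto

lemma A_functor: "q \<in> carrier G \<Longrightarrow> is_functor C C (aobj A q) (amor A q)"
  using action_A unfolding is_action_def by blast

end

sublocale extension_action \<subseteq> CG: eqv_category C G "carrier G" A
  by unfold_locales (auto simp: category_C A_functor)

sublocale extension_action \<subseteq> CN: eqv_category C G N A
  by unfold_locales (auto simp: category_C A_functor)

context extension_action
begin

lemma B_functor: "h \<in> carrier G'' \<Longrightarrow> is_functor D D (aobj B h) (amor B h)"
  using action_B unfolding is_action_def by blast

end

sublocale extension_action \<subseteq> DB: eqv_category D G'' "carrier G''" B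
  by unfold_locales (auto simp: CN.eqv_cat_is_category B_functor)

context extension_action
begin

lemma amult_A:
  assumes "q2 \<in> carrier G" "q1 \<in> carrier G" "Z \<in> cobj C"
  shows "amult A q2 q1 Z \<in> chom C (aobj A q2 (aobj A q1 Z)) (aobj A (q2 \<otimes>\<^bsub>G\<^esub> q1) Z) \<and>
         is_iso C (amult A q2 q1 Z)"
  using action_A assms unfolding is_action_def is_nat_iso_def by auto

lemma amult_A_carr [simp]: "q2 \<in> carrier G \<Longrightarrow> q1 \<in> carrier G \<Longrightarrow> Z \<in> cobj C \<Longrightarrow> amult A q2 q1 Z \<in> carr C"
  and amult_A_dom [simp]: "q2 \<in> carrier G \<Longrightarrow> q1 \<in> carrier G \<Longrightarrow> Z \<in> cobj C \<Longrightarrow>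
    cdom C (amult A q2 q1 Z) = aobj A q2 (aobj A q1 Z)"
  and amult_A_cod [simp]: "q2 \<in> carrier G \<Longrightarrow> q1 \<in> carrier G \<Longrightarrow> Z \<in> cobj C \<Longrightarrow>
    ccod C (amult A q2 q1 Z) = aobj A (q2 \<otimes>\<^bsub>G\<^esub> q1) Z"
  and amult_A_iso [simp]: "q2 \<in> carrier G \<Longrightarrow> q1 \<in> carrier G \<Longrightarrow> Z \<in> cobj C \<Longrightarrow> is_iso C (amult A q2 q1 Z)"
  using amult_A by (auto simp: chom_def)

lemma D_obj_fst [simp]: "U \<in> cobj D \<Longrightarrow> fst U \<in> cobj C"
  unfolding eqv_cat_simps mem_Collect_eq eqv_obj_iff by blast

lemma D_obj_structure:
  "U \<in> cobj D \<Longrightarrow> n \<in> N \<Longrightarrow> snd U n \<in> chom C (aobj A n (fst U)) (fst U) \<and> is_iso C (snd U n)"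
  unfolding eqv_cat_simps mem_Collect_eq eqv_obj_iff by blast

lemma D_arr_umor: "f \<in> carr D \<Longrightarrow> umor f \<in> chom C (fst (fst f)) (fst (fst (snd f)))"
  unfolding eqv_carr_iff by blast

lemma D_arr_compatible: "f \<in> carr D \<Longrightarrow> n \<in> N \<Longrightarrow>
   ccomp C (snd (fst (snd f)) n) (amor A n (umor f)) = ccomp C (umor f) (snd (fst f) n)"
  unfolding eqv_carr_iff by blast

lemma gamma_nat_iso: "q \<in> carrier G \<Longrightarrow>
   is_nat_iso D D (canon_obj G N C A q) (amor (canon_action G N C A) q) (aobj B (\<pi> q)) (amor B (\<pi> q)) (\<gamma> q)"
  using gamma_iso unfolding is_action_iso_def by (simp add: canon_action_def pullback_action_def)

lemma gamma_hom: "q \<in> carrier G \<Longrightarrow> U \<in> cobj D \<Longrightarrow>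
   \<gamma> q U \<in> chom D (canon_obj G N C A q U) (aobj B (\<pi> q) U) \<and> is_iso D (\<gamma> q U)"
  using gamma_nat_iso unfolding is_nat_iso_def by blast

lemma canon_obj_fst [simp]: "fst (canon_obj G N C A q U) = aobj A q (fst U)"
  by (simp add: canon_obj_def)

lemma canon_obj_snd: "n \<in> N \<Longrightarrow> snd (canon_obj G N C A q U) n =
   ccomp C (amor A q (snd U (inv\<^bsub>G\<^esub> q \<otimes>\<^bsub>G\<^esub> n \<otimes>\<^bsub>G\<^esub> q)))
     (ccomp C (cinv C (amult A q (inv\<^bsub>G\<^esub> q \<otimes>\<^bsub>G\<^esub> n \<otimes>\<^bsub>G\<^esub> q) (fst U))) (amult A n q (fst U)))"
  by (simp add: canon_obj_def)

lemma gamma_dom [simp]: "q \<in> carrier G \<Longrightarrow> U \<in> cobj D \<Longrightarrow> fst (\<gamma> q U) = canon_obj G N C A q U"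
  and gamma_cod [simp]: "q \<in> carrier G \<Longrightarrow> U \<in> cobj D \<Longrightarrow> fst (snd (\<gamma> q U)) = aobj B (\<pi> q) U"
  using gamma_hom[of q U] unfolding chom_def by simp_all

lemma canon_obj_D: "q \<in> carrier G \<Longrightarrow> U \<in> cobj D \<Longrightarrow> canon_obj G N C A q U \<in> cobj D"
  using gamma_hom[of q U] DB.dom_obj[of "\<gamma> q U"] by (simp add: chom_def del: eqv_cat_simps)

lemma umor_gamma_carr [simp]: "q \<in> carrier G \<Longrightarrow> U \<in> cobj D \<Longrightarrow> umor (\<gamma> q U) \<in> carr C"
  and umor_gamma_dom [simp]: "q \<in> carrier G \<Longrightarrow> U \<in> cobj D \<Longrightarrow> cdom C (umor (\<gamma> q U)) = aobj A q (fst U)"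
  and umor_gamma_cod [simp]: "q \<in> carrier G \<Longrightarrow> U \<in> cobj D \<Longrightarrow> ccod C (umor (\<gamma> q U)) = fst (aobj B (\<pi> q) U)"
  and umor_gamma_iso [simp]: "q \<in> carrier G \<Longrightarrow> U \<in> cobj D \<Longrightarrow> is_iso C (umor (\<gamma> q U))"
  using gamma_hom[of q U] D_arr_umor[of "\<gamma> q U"] CN.eqv_iso_imp_iso[of "\<gamma> q U"]
  by (simp_all add: chom_def)

lemma gamma_natural: "q \<in> carrier G \<Longrightarrow> f \<in> carr D \<Longrightarrow>
   ccomp C (umor (\<gamma> q (fst (snd f)))) (amor A q (umor f)) = ccomp C (umor (amor B (\<pi> q) f)) (umor (\<gamma> q (fst f)))"
proof -
  assume q: "q \<in> carrier G" and f: "f \<in> carr D"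
  have "ccomp D (\<gamma> q (ccod D f)) (amor (canon_action G N C A) q f) = ccomp D (amor B (\<pi> q) f) (\<gamma> q (cdom D f))"
    using gamma_nat_iso[OF q] f unfolding is_nat_iso_def by blast
  then show ?thesis by (simp add: canon_action_def)
qed

lemma gamma_unit:
  assumes "U \<in> cobj D"
  shows "ccomp C (umor (aunit B U)) (umor (\<gamma> \<one>\<^bsub>G\<^esub> U)) = aunit A (fst U)"
proof -
  have "ccomp D (aunit (pullback_action \<pi> B) U) (\<gamma> \<one>\<^bsub>G\<^esub> U) = aunit (canon_action G N C A) U"
    using gamma_iso assms unfolding is_action_iso_def by blast
  then show ?thesis by (simp add: canon_action_def pullback_action_def)
qed

lemma gamma_cocycle: "q2 \<in> carrier G \<Longrightarrow> q1 \<in> carrier G \<Longrightarrow> U \<in> cobj D \<Longrightarrow>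
  ccomp C (umor (\<gamma> (q2 \<otimes>\<^bsub>G\<^esub> q1) U)) (amult A q2 q1 (fst U)) =
  ccomp C (umor (amult B (\<pi> q2) (\<pi> q1) U))
    (ccomp C (umor (\<gamma> q2 (aobj B (\<pi> q1) U))) (amor A q2 (umor (\<gamma> q1 U))))"
proof -
  assume q: "q2 \<in> carrier G" "q1 \<in> carrier G" and U: "U \<in> cobj D"
  have "ccomp D (\<gamma> (q2 \<otimes>\<^bsub>G\<^esub> q1) U) (amult (canon_action G N C A) q2 q1 U) =
        ccomp D (amult (pullback_action \<pi> B) q2 q1 U)
          (ccomp D (\<gamma> q2 (aobj (pullback_action \<pi> B) q1 U)) (amor (canon_action G N C A) q2 (\<gamma> q1 U)))"
    using gamma_iso q U unfolding is_action_iso_def by blast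
  then show ?thesis by (simp add: canon_action_def pullback_action_def)
qed

lemma gamma_trivial:
  assumes "n \<in> N" "U \<in> cobj D"
  shows "ccomp C (umor (aunit B U)) (umor (\<gamma> n U)) = snd U n"
proof -
  have "ccomp D (aunit B U) (\<gamma> n U) = (canon_obj G N C A n U, U, snd U n)"
    using gamma_trivialization assms unfolding restricts_to_canonical_trivialization_def by blast
  then show ?thesis by simp
qed

lemma B_unit_law: "h \<in> carrier G'' \<Longrightarrow> U \<in> cobj D \<Longrightarrow> amult B \<one>\<^bsub>G''\<^esub> h U = aunit B (aobj B h U)"
  using action_B unfolding is_action_def by blast

lemma aunit_B_hom: "U \<in> cobj D \<Longrightarrow> aunit B U \<in> chom D (aobj B \<one>\<^bsub>G''\<^esub> U) U"
  using action_B unfolding is_action_def is_nat_iso_def id_apply by blast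

lemma amult_B_hom: "h2 \<in> carrier G'' \<Longrightarrow> h1 \<in> carrier G'' \<Longrightarrow> U \<in> cobj D \<Longrightarrow>
   amult B h2 h1 U \<in> chom D (aobj B h2 (aobj B h1 U)) (aobj B (h2 \<otimes>\<^bsub>G''\<^esub> h1) U) \<and> is_iso D (amult B h2 h1 U)"
  using action_B unfolding is_action_def is_nat_iso_def o_apply by blast

lemma umor_aunit_B_carr [simp]: "U \<in> cobj D \<Longrightarrow> umor (aunit B U) \<in> carr C"
  and umor_aunit_B_dom [simp]: "U \<in> cobj D \<Longrightarrow> cdom C (umor (aunit B U)) = fst (aobj B \<one>\<^bsub>G''\<^esub> U)"
  and umor_aunit_B_cod [simp]: "U \<in> cobj D \<Longrightarrow> ccod C (umor (aunit B U)) = fst U"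
  using aunit_B_hom[of U] D_arr_umor[of "aunit B U"] by (simp_all add: chom_def)

lemma umor_amult_B_carr [simp]: "h2 \<in> carrier G'' \<Longrightarrow> h1 \<in> carrier G'' \<Longrightarrow> U \<in> cobj D \<Longrightarrow>
    umor (amult B h2 h1 U) \<in> carr C"
  and umor_amult_B_dom [simp]: "h2 \<in> carrier G'' \<Longrightarrow> h1 \<in> carrier G'' \<Longrightarrow> U \<in> cobj D \<Longrightarrow>
    cdom C (umor (amult B h2 h1 U)) = fst (aobj B h2 (aobj B h1 U))"
  and umor_amult_B_cod [simp]: "h2 \<in> carrier G'' \<Longrightarrow> h1 \<in> carrier G'' \<Longrightarrow> U \<in> cobj D \<Longrightarrow>
    ccod C (umor (amult B h2 h1 U)) = fst (aobj B (h2 \<otimes>\<^bsub>G''\<^esub> h1) U)"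
  using amult_B_hom[of h2 h1 U] D_arr_umor[of "amult B h2 h1 U"] by (simp_all add: chom_def)

lemma umor_amor_B_carr [simp]: "h \<in> carrier G'' \<Longrightarrow> f \<in> carr D \<Longrightarrow> umor (amor B h f) \<in> carr C"
  and umor_amor_B_dom [simp]: "h \<in> carrier G'' \<Longrightarrow> f \<in> carr D \<Longrightarrow> cdom C (umor (amor B h f)) = fst (aobj B h (fst f))"
  and umor_amor_B_cod [simp]: "h \<in> carrier G'' \<Longrightarrow> f \<in> carr D \<Longrightarrow> ccod C (umor (amor B h f)) = fst (aobj B h (fst (snd f)))"
  using DB.amor_carr[of h f] DB.amor_dom[of h f] DB.amor_cod[of h f] D_arr_umor[of "amor B h f"]
  by (simp_all add: chom_def)

lemma gamma_carr: "q \<in> carrier G \<Longrightarrow> U \<in> cobj D \<Longrightarrow> \<gamma> q U \<in> carr D"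
  using gamma_hom by (simp add: chom_def)

lemma umor_D_hom: "f \<in> chom D U V \<Longrightarrow> umor f \<in> chom C (fst U) (fst V)"
  using D_arr_umor[of f] by (simp add: chom_def)

lemma gamma_mult_kernel:
  assumes n: "n \<in> N" and q: "q \<in> carrier G" and U: "U \<in> cobj D"
  shows "ccomp C (umor (\<gamma> (n \<otimes>\<^bsub>G\<^esub> q) U)) (amult A n q (fst U)) =
         ccomp C (umor (\<gamma> q U)) (snd (canon_obj G N C A q U) n)"
proof -
  let ?Y = "aobj B (\<pi> q) U"
  have nc: "n \<in> carrier G" and pn: "\<pi> n = \<one>\<^bsub>G''\<^esub>" using n by (simp_all add: in_N_iff)
  have Y: "?Y \<in> cobj D" using DB.aobj_obj q U by simp
  have "ccomp C (umor (\<gamma> (n \<otimes>\<^bsub>G\<^esub> q) U)) (amult A n q (fst U)) =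
        ccomp C (umor (aunit B ?Y)) (ccomp C (umor (\<gamma> n ?Y)) (amor A n (umor (\<gamma> q U))))"
    using gamma_cocycle[OF nc q U] pn B_unit_law[OF _ U] q by simp
  also have "\<dots> = ccomp C (ccomp C (umor (aunit B ?Y)) (umor (\<gamma> n ?Y))) (amor A n (umor (\<gamma> q U)))"
    using nc pn q U Y by simp
  also have "\<dots> = ccomp C (snd ?Y n) (amor A n (umor (\<gamma> q U)))"
    using gamma_trivial[OF n Y] by simp
  also have "\<dots> = ccomp C (umor (\<gamma> q U)) (snd (canon_obj G N C A q U) n)"
    using D_arr_compatible[OF gamma_carr[OF q U] n] q U by simp
  finally show ?thesis .
qed

definition res_obj :: "('g, 'o, 'm) eqv_ob \<Rightarrow> ('g, 'o, 'm) eqv_ob" where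
  "res_obj Xa = (fst Xa, restrict (snd Xa) N)"

lemma res_obj_fst [simp]: "fst (res_obj Xa) = fst Xa"
  and res_obj_snd [simp]: "n \<in> N \<Longrightarrow> snd (res_obj Xa) n = snd Xa n"
  by (simp_all add: res_obj_def)

lemma CG_obj_parts:
  assumes "CG_obj Xa"
  shows "fst Xa \<in> cobj C" "snd Xa \<in> extensional (carrier G)"
    "\<And>q. q \<in> carrier G \<Longrightarrow> snd Xa q \<in> carr C \<and> cdom C (snd Xa q) = aobj A q (fst Xa) \<and>
       ccod C (snd Xa q) = fst Xa \<and> is_iso C (snd Xa q)"
    "snd Xa \<one>\<^bsub>G\<^esub> = aunit A (fst Xa)"
    "\<And>q2 q1. q2 \<in> carrier G \<Longrightarrow> q1 \<in> carrier G \<Longrightarrow>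
       ccomp C (snd Xa q2) (amor A q2 (snd Xa q1)) = ccomp C (snd Xa (q2 \<otimes>\<^bsub>G\<^esub> q1)) (amult A q2 q1 (fst Xa))"
  using assms unfolding eqv_obj_iff chom_def by blast+

lemma res_obj_D:
  assumes "CG_obj Xa"
  shows "res_obj Xa \<in> cobj D"
proof -
  note P = CG_obj_parts[OF assms]
  show ?thesis unfolding eqv_cat_simps mem_Collect_eq eqv_obj_iff res_obj_def fst_conv snd_conv
  proof (intro conjI ballI)
    show "fst Xa \<in> cobj C" by (rule P(1))
    show "restrict (snd Xa) N \<in> extensional N" by simp
    show "restrict (snd Xa) N \<one>\<^bsub>G\<^esub> = aunit A (fst Xa)" using P(4) by simp
    fix q assume q: "q \<in> N"
    show "restrict (snd Xa) N q \<in> chom C (aobj A q (fst Xa)) (fst Xa)" "is_iso C (restrict (snd Xa) N q)"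
      using P(3)[of q] q unfolding chom_def by simp_all
  next
    fix q2 q1 assume "q2 \<in> N" "q1 \<in> N"
    then show "ccomp C (restrict (snd Xa) N q2) (amor A q2 (restrict (snd Xa) N q1)) =
          ccomp C (restrict (snd Xa) N (q2 \<otimes>\<^bsub>G\<^esub> q1)) (amult A q2 q1 (fst Xa))"
      using P(5)[of q2 q1] N_normal normal_imp_subgroup subgroup.m_closed by fastforce
  qed
qed

definition structure_arrow :: "('g, 'o, 'm) eqv_ob \<Rightarrow> 'g \<Rightarrow> ('g, 'o, 'm) eqv_ar" where
  "structure_arrow Xa q = (canon_obj G N C A q (res_obj Xa), res_obj Xa, snd Xa q)"

lemma structure_canon_obj_compat:
  assumes Xa: "CG_obj Xa" and q: "q \<in> carrier G" and n: "n \<in> N"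
  shows "ccomp C (snd Xa q) (snd (canon_obj G N C A q (res_obj Xa)) n) =
         ccomp C (snd Xa (n \<otimes>\<^bsub>G\<^esub> q)) (amult A n q (fst Xa))"
proof -
  interpret G: group G by (rule group_G)
  note P = CG_obj_parts[OF Xa]
  define k where "k = inv\<^bsub>G\<^esub> q \<otimes>\<^bsub>G\<^esub> n \<otimes>\<^bsub>G\<^esub> q"
  have k: "k \<in> N" using conj_in_N[OF q n] k_def by simp
  have nc: "n \<in> carrier G" and kc: "k \<in> carrier G" using n k by simp_all
  have qk: "q \<otimes>\<^bsub>G\<^esub> k = n \<otimes>\<^bsub>G\<^esub> q"
    unfolding k_def using q nc by (simp add: G.m_assoc[symmetric])
  have "ccomp C (snd Xa q) (snd (canon_obj G N C A q (res_obj Xa)) n) =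
        ccomp C (ccomp C (ccomp C (snd Xa q) (amor A q (snd Xa k))) (cinv C (amult A q k (fst Xa))))
          (amult A n q (fst Xa))"
    using canon_obj_snd[OF n, of q "res_obj Xa", folded k_def] k kc qk q nc P(1) P(3)[of q] P(3)[of k]
    by simp
  also have "\<dots> = ccomp C (ccomp C (ccomp C (snd Xa (q \<otimes>\<^bsub>G\<^esub> k)) (amult A q k (fst Xa)))
      (cinv C (amult A q k (fst Xa)))) (amult A n q (fst Xa))"
    using P(5)[of q k] q kc by simp
  also have "\<dots> = ccomp C (snd Xa (n \<otimes>\<^bsub>G\<^esub> q)) (amult A n q (fst Xa))"
    using qk q nc kc P(1) P(3)[of "n \<otimes>\<^bsub>G\<^esub> q"] by simp
  finally show ?thesis .
qed

lemma structure_arrow_hom: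
  assumes Xa: "CG_obj Xa" and q: "q \<in> carrier G"
  shows "structure_arrow Xa q \<in> chom D (canon_obj G N C A q (res_obj Xa)) (res_obj Xa) \<and>
         is_iso D (structure_arrow Xa q)"
proof -
  note P = CG_obj_parts[OF Xa]
  have U: "res_obj Xa \<in> cobj D" by (rule res_obj_D[OF Xa])
  have cU: "canon_obj G N C A q (res_obj Xa) \<in> cobj D" by (rule canon_obj_D[OF q U])
  have "ccomp C (snd (res_obj Xa) n) (amor A n (snd Xa q)) =
        ccomp C (snd Xa q) (snd (canon_obj G N C A q (res_obj Xa)) n)" if n: "n \<in> N" for n
    using structure_canon_obj_compat[OF Xa q n] P(5)[of n q] n q by simp
  then have "structure_arrow Xa q \<in> carr D"
    using U cU P(3)[of q] q unfolding eqv_carr_iff chom_def structure_arrow_def by simp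
  then show ?thesis
    using CN.iso_imp_eqv_iso P(3)[of q] q by (simp add: chom_def structure_arrow_def)
qed

lemma structure_gamma_lift_independent:
  assumes Xa: "CG_obj Xa" and q1: "q1 \<in> carrier G" and q2: "q2 \<in> carrier G" and eq: "\<pi> q1 = \<pi> q2"
  shows "ccomp C (ccomp C (snd Xa q1) (cinv C (umor (\<gamma> q1 (res_obj Xa))))) (umor (\<gamma> q2 (res_obj Xa))) =
         snd Xa q2"
proof -
  interpret G: group G by (rule group_G)
  note P = CG_obj_parts[OF Xa]
  define n where "n = q2 \<otimes>\<^bsub>G\<^esub> inv\<^bsub>G\<^esub> q1"
  have U: "res_obj Xa \<in> cobj D" by (rule res_obj_D[OF Xa])
  have n: "n \<in> N" using same_image_in_N[OF q1 q2 eq] n_def by simp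
  have nc: "n \<in> carrier G" using n by simp
  have nq: "n \<otimes>\<^bsub>G\<^esub> q1 = q2" using q1 q2 n_def by (simp add: G.m_assoc)
  let ?m = "amult A n q1 (fst Xa)"
  let ?c = "snd (canon_obj G N C A q1 (res_obj Xa)) n"
  let ?a = "ccomp C (snd Xa q1) (cinv C (umor (\<gamma> q1 (res_obj Xa))))"
  have c: "?c \<in> carr C" "cdom C ?c = aobj A n (aobj A q1 (fst Xa))" "ccod C ?c = aobj A q1 (fst Xa)"
    using D_obj_structure[OF canon_obj_D[OF q1 U] n] by (simp_all add: chom_def)
  note facts = q1 q2 eq nc U c P(1) P(3)[OF q1] P(3)[OF q2]
  have "ccomp C (ccomp C ?a (umor (\<gamma> q2 (res_obj Xa)))) ?m =
        ccomp C ?a (ccomp C (umor (\<gamma> (n \<otimes>\<^bsub>G\<^esub> q1) (res_obj Xa))) (amult A n q1 (fst (res_obj Xa))))"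
    using facts nq by simp
  also have "\<dots> = ccomp C ?a (ccomp C (umor (\<gamma> q1 (res_obj Xa))) ?c)"
    by (simp only: gamma_mult_kernel[OF n q1 U])
  also have "\<dots> = ccomp C (snd Xa q1) ?c"
    using facts by simp
  also have "\<dots> = ccomp C (snd Xa q2) ?m"
    using structure_canon_obj_compat[OF Xa q1 n] nq by simp
  finally show ?thesis
    using facts nq by (subst (asm) CG.iso_cancel_right) simp_all
qed

(* By structure_gamma_lift_independent, any other preimage of h in place of pi_section h
   gives the same morphism. *)
definition descend :: "('g, 'o, 'm) eqv_ob \<Rightarrow> 'h \<Rightarrow> ('g, 'o, 'm) eqv_ar" where
  "descend Xa h = ccomp D (structure_arrow Xa (pi_section h)) (cinv D (\<gamma> (pi_section h) (res_obj Xa)))"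

lemma descend_hom:
  assumes Xa: "CG_obj Xa" and h: "h \<in> carrier G''"
  shows "descend Xa h \<in> chom D (aobj B h (res_obj Xa)) (res_obj Xa) \<and> is_iso D (descend Xa h)"
proof -
  let ?s = "pi_section h"
  have s: "?s \<in> carrier G" "\<pi> ?s = h" using h by simp_all
  have U: "res_obj Xa \<in> cobj D" by (rule res_obj_D[OF Xa])
  have g: "\<gamma> ?s (res_obj Xa) \<in> chom D (canon_obj G N C A ?s (res_obj Xa)) (aobj B h (res_obj Xa))"
    "is_iso D (\<gamma> ?s (res_obj Xa))"
    using gamma_hom[OF s(1) U] s(2) by simp_all
  then have "cinv D (\<gamma> ?s (res_obj Xa)) \<in> chom D (aobj B h (res_obj Xa)) (canon_obj G N C A ?s (res_obj Xa))"
    "is_iso D (cinv D (\<gamma> ?s (res_obj Xa)))"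
    by (simp_all only: DB.hom_iff DB.cinv_carr DB.cinv_dom DB.cinv_cod DB.iso_cinv)
  with structure_arrow_hom[OF Xa s(1)] show ?thesis
    unfolding descend_def using DB.comp_hom DB.iso_comp by (metis DB.hom_iff)
qed

lemma umor_descend:
  assumes Xa: "CG_obj Xa" and h: "h \<in> carrier G''"
  shows "umor (descend Xa h) =
         ccomp C (snd Xa (pi_section h)) (cinv C (umor (\<gamma> (pi_section h) (res_obj Xa))))"
  using gamma_hom[OF pi_section_carrier[OF h] res_obj_D[OF Xa]]
  by (simp add: descend_def structure_arrow_def CN.eqv_cinv)

definition lift_structure :: "('g, 'o, 'm) eqv_ob \<Rightarrow> ('h \<Rightarrow> ('g, 'o, 'm) eqv_ar) \<Rightarrow> 'g \<Rightarrow> 'm" where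
  "lift_structure U \<beta> q = ccomp C (umor (\<beta> (\<pi> q))) (umor (\<gamma> q U))"

lemma lift_structure_descend:
  assumes Xa: "CG_obj Xa" and q: "q \<in> carrier G"
  shows "lift_structure (res_obj Xa) (descend Xa) q = snd Xa q"
  unfolding lift_structure_def umor_descend[OF Xa pi_carrier[OF q]]
  using structure_gamma_lift_independent[OF Xa _ q] q by simp

lemma lift_structure_hom:
  assumes U: "U \<in> cobj D" and q: "q \<in> carrier G"
    and \<beta>: "\<beta> (\<pi> q) \<in> chom D (aobj B (\<pi> q) U) U" "is_iso D (\<beta> (\<pi> q))"
  shows "lift_structure U \<beta> q \<in> chom C (aobj A q (fst U)) (fst U) \<and> is_iso C (lift_structure U \<beta> q)"
proof -
  have "umor (\<beta> (\<pi> q)) \<in> chom C (fst (aobj B (\<pi> q) U)) (fst U)" "is_iso C (umor (\<beta> (\<pi> q)))"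
    using umor_D_hom[OF \<beta>(1)] CN.eqv_iso_imp_iso[OF \<beta>(2)] by simp_all
  then show ?thesis
    using U q unfolding lift_structure_def by (simp add: CG.hom_iff CG.iso_comp)
qed

lemma lift_unit_iff:
  assumes U: "U \<in> cobj D" and \<beta>: "\<beta> \<one>\<^bsub>G''\<^esub> \<in> chom D (aobj B \<one>\<^bsub>G''\<^esub> U) U"
  shows "\<beta> \<one>\<^bsub>G''\<^esub> = aunit B U \<longleftrightarrow> lift_structure U \<beta> \<one>\<^bsub>G\<^esub> = aunit A (fst U)"
proof -
  have b: "umor (\<beta> \<one>\<^bsub>G''\<^esub>) \<in> chom C (fst (aobj B \<one>\<^bsub>G''\<^esub> U)) (fst U)"
    by (rule umor_D_hom[OF \<beta>])
  have "\<beta> \<one>\<^bsub>G''\<^esub> = aunit B U \<longleftrightarrow> umor (\<beta> \<one>\<^bsub>G''\<^esub>) = umor (aunit B U)"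
    by (rule CN.eqv_arrow_eq_iff[OF \<beta> aunit_B_hom[OF U]])
  also have "\<dots> \<longleftrightarrow> ccomp C (umor (\<beta> \<one>\<^bsub>G''\<^esub>)) (umor (\<gamma> \<one>\<^bsub>G\<^esub> U)) =
                    ccomp C (umor (aunit B U)) (umor (\<gamma> \<one>\<^bsub>G\<^esub> U))"
    using b U by (simp add: CG.iso_cancel_right CG.hom_iff)
  also have "\<dots> \<longleftrightarrow> lift_structure U \<beta> \<one>\<^bsub>G\<^esub> = aunit A (fst U)"
    using gamma_unit[OF U] by (simp add: lift_structure_def)
  finally show ?thesis .
qed

(* The two sides of the cocycle conditions for beta and for lift_structure U beta are compared
   after precomposition with this isomorphism. *)
definition gamma_pair :: "'g \<Rightarrow> 'g \<Rightarrow> ('g, 'o, 'm) eqv_ob \<Rightarrow> 'm" where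
  "gamma_pair q2 q1 U = ccomp C (umor (\<gamma> q2 (aobj B (\<pi> q1) U))) (amor A q2 (umor (\<gamma> q1 U)))"

lemma gamma_pair_iso:
  assumes "q2 \<in> carrier G" "q1 \<in> carrier G" "U \<in> cobj D"
  shows "is_iso C (gamma_pair q2 q1 U)" "gamma_pair q2 q1 U \<in> carr C"
    "ccod C (gamma_pair q2 q1 U) = fst (aobj B (\<pi> q2) (aobj B (\<pi> q1) U))"
  using assms DB.aobj_obj[OF pi_carrier[OF assms(2)] assms(3)]
  by (simp_all add: gamma_pair_def CG.iso_comp CG.iso_carr CG.amor_iso)

lemma lift_cocycle_lhs:
  assumes U: "U \<in> cobj D" and \<beta>: "\<And>h. h \<in> carrier G'' \<Longrightarrow> \<beta> h \<in> chom D (aobj B h U) U"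
    and q1: "q1 \<in> carrier G" and q2: "q2 \<in> carrier G"
  shows "ccomp C (umor (ccomp D (\<beta> (\<pi> q2)) (amor B (\<pi> q2) (\<beta> (\<pi> q1))))) (gamma_pair q2 q1 U) =
         ccomp C (lift_structure U \<beta> q2) (amor A q2 (lift_structure U \<beta> q1))"
proof -
  let ?V = "aobj B (\<pi> q1) U"
  have \<beta>1: "\<beta> (\<pi> q1) \<in> chom D ?V U" using \<beta> q1 by simp
  have nat: "ccomp C (umor (amor B (\<pi> q2) (\<beta> (\<pi> q1)))) (umor (\<gamma> q2 ?V)) =
             ccomp C (umor (\<gamma> q2 U)) (amor A q2 (umor (\<beta> (\<pi> q1))))"
    using gamma_natural[OF q2, of "\<beta> (\<pi> q1)"] \<beta>1 by (simp add: chom_def)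
  note facts = q1 q2 U DB.aobj_obj[OF _ U] umor_D_hom[OF \<beta>1] umor_D_hom[OF \<beta>[of "\<pi> q2"]]
  have "ccomp C (umor (ccomp D (\<beta> (\<pi> q2)) (amor B (\<pi> q2) (\<beta> (\<pi> q1))))) (gamma_pair q2 q1 U) =
        ccomp C (ccomp C (umor (\<beta> (\<pi> q2)))
          (ccomp C (umor (amor B (\<pi> q2) (\<beta> (\<pi> q1)))) (umor (\<gamma> q2 ?V)))) (amor A q2 (umor (\<gamma> q1 U)))"
    using facts \<beta>1 by (simp add: gamma_pair_def CG.hom_iff DB.hom_iff)
  also have "\<dots> = ccomp C (ccomp C (umor (\<beta> (\<pi> q2)))
          (ccomp C (umor (\<gamma> q2 U)) (amor A q2 (umor (\<beta> (\<pi> q1)))))) (amor A q2 (umor (\<gamma> q1 U)))"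
    by (simp only: nat)
  also have "\<dots> = ccomp C (lift_structure U \<beta> q2) (amor A q2 (lift_structure U \<beta> q1))"
    using facts by (simp add: CG.hom_iff lift_structure_def)
  finally show ?thesis .
qed

lemma lift_cocycle_rhs:
  assumes U: "U \<in> cobj D" and \<beta>: "\<And>h. h \<in> carrier G'' \<Longrightarrow> \<beta> h \<in> chom D (aobj B h U) U"
    and q1: "q1 \<in> carrier G" and q2: "q2 \<in> carrier G"
  shows "ccomp C (umor (ccomp D (\<beta> (\<pi> q2 \<otimes>\<^bsub>G''\<^esub> \<pi> q1)) (amult B (\<pi> q2) (\<pi> q1) U))) (gamma_pair q2 q1 U) =
         ccomp C (lift_structure U \<beta> (q2 \<otimes>\<^bsub>G\<^esub> q1)) (amult A q2 q1 (fst U))"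
proof -
  let ?\<beta> = "umor (\<beta> (\<pi> q2 \<otimes>\<^bsub>G''\<^esub> \<pi> q1))"
  note facts = q1 q2 U DB.aobj_obj[OF _ U] umor_D_hom[OF \<beta>[of "\<pi> q2 \<otimes>\<^bsub>G''\<^esub> \<pi> q1"]]
  have "ccomp C (umor (ccomp D (\<beta> (\<pi> q2 \<otimes>\<^bsub>G''\<^esub> \<pi> q1)) (amult B (\<pi> q2) (\<pi> q1) U))) (gamma_pair q2 q1 U) =
        ccomp C ?\<beta> (ccomp C (umor (amult B (\<pi> q2) (\<pi> q1) U)) (gamma_pair q2 q1 U))"
    using facts by (simp add: gamma_pair_def CG.hom_iff)
  also have "\<dots> = ccomp C ?\<beta> (ccomp C (umor (\<gamma> (q2 \<otimes>\<^bsub>G\<^esub> q1) U)) (amult A q2 q1 (fst U)))"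
    using gamma_cocycle[OF q2 q1 U] by (simp add: gamma_pair_def)
  also have "\<dots> = ccomp C (lift_structure U \<beta> (q2 \<otimes>\<^bsub>G\<^esub> q1)) (amult A q2 q1 (fst U))"
    using facts by (simp add: CG.hom_iff lift_structure_def)
  finally show ?thesis .
qed

lemma lift_cocycle_iff:
  assumes U: "U \<in> cobj D" and \<beta>: "\<And>h. h \<in> carrier G'' \<Longrightarrow> \<beta> h \<in> chom D (aobj B h U) U"
    and q1: "q1 \<in> carrier G" and q2: "q2 \<in> carrier G"
  shows "ccomp D (\<beta> (\<pi> q2)) (amor B (\<pi> q2) (\<beta> (\<pi> q1))) =
           ccomp D (\<beta> (\<pi> q2 \<otimes>\<^bsub>G''\<^esub> \<pi> q1)) (amult B (\<pi> q2) (\<pi> q1) U) \<longleftrightarrow>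
         ccomp C (lift_structure U \<beta> q2) (amor A q2 (lift_structure U \<beta> q1)) =
           ccomp C (lift_structure U \<beta> (q2 \<otimes>\<^bsub>G\<^esub> q1)) (amult A q2 q1 (fst U))"
    (is "?L = ?R \<longleftrightarrow> _")
proof -
  let ?V = "aobj B (\<pi> q1) U"
  have h: "\<pi> q1 \<in> carrier G''" "\<pi> q2 \<in> carrier G''" using q1 q2 by simp_all
  have L: "?L \<in> chom D (aobj B (\<pi> q2) ?V) U"
    using DB.comp_hom[OF DB.amor_hom[OF h(2) \<beta>[OF h(1)]] \<beta>[OF h(2)]] .
  have R: "?R \<in> chom D (aobj B (\<pi> q2) ?V) U"
    using DB.comp_hom[OF conjunct1[OF amult_B_hom[OF h(2,1) U]] \<beta>[OF mult_G''[OF h(2,1)]]] .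
  have "?L = ?R \<longleftrightarrow> umor ?L = umor ?R"
    by (rule CN.eqv_arrow_eq_iff[OF L R])
  also have "\<dots> \<longleftrightarrow> ccomp C (umor ?L) (gamma_pair q2 q1 U) = ccomp C (umor ?R) (gamma_pair q2 q1 U)"
    using umor_D_hom[OF L] umor_D_hom[OF R] gamma_pair_iso[OF q2 q1 U]
    by (simp add: CG.iso_cancel_right CG.hom_iff)
  finally show ?thesis
    by (simp only: lift_cocycle_lhs[of U \<beta> q1 q2, OF U \<beta> q1 q2] lift_cocycle_rhs[of U \<beta> q1 q2, OF U \<beta> q1 q2])
qed

lemma lift_natural_iff:
  assumes g: "g \<in> chom D U V" and q: "q \<in> carrier G"
    and \<beta>: "\<beta> (\<pi> q) \<in> chom D (aobj B (\<pi> q) U) U" and \<beta>': "\<beta>' (\<pi> q) \<in> chom D (aobj B (\<pi> q) V) V"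
  shows "ccomp D (\<beta>' (\<pi> q)) (amor B (\<pi> q) g) = ccomp D g (\<beta> (\<pi> q)) \<longleftrightarrow>
         ccomp C (lift_structure V \<beta>' q) (amor A q (umor g)) = ccomp C (umor g) (lift_structure U \<beta> q)"
    (is "?L = ?R \<longleftrightarrow> ?L' = ?R'")
proof -
  have h: "\<pi> q \<in> carrier G''" using q by simp
  have U: "U \<in> cobj D" and V: "V \<in> cobj D"
    using g DB.dom_obj[of g] DB.cod_obj[of g] by (simp_all add: DB.hom_iff)
  have gC: "umor g \<in> chom C (fst U) (fst V)" by (rule umor_D_hom[OF g])
  have \<beta>C: "umor (\<beta> (\<pi> q)) \<in> chom C (fst (aobj B (\<pi> q) U)) (fst U)" by (rule umor_D_hom[OF \<beta>])
  have \<beta>'C: "umor (\<beta>' (\<pi> q)) \<in> chom C (fst (aobj B (\<pi> q) V)) (fst V)" by (rule umor_D_hom[OF \<beta>'])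
  have L: "?L \<in> chom D (aobj B (\<pi> q) U) V"
    using DB.comp_hom[OF DB.amor_hom[OF h g] \<beta>'] .
  have R: "?R \<in> chom D (aobj B (\<pi> q) U) V" using DB.comp_hom[OF \<beta> g] .
  have nat: "ccomp C (umor (\<gamma> q V)) (amor A q (umor g)) = ccomp C (umor (amor B (\<pi> q) g)) (umor (\<gamma> q U))"
    using gamma_natural[OF q, of g] g by (simp add: chom_def)
  note facts = q h U V gC \<beta>C \<beta>'C g
  have Li: "ccomp C (umor ?L) (umor (\<gamma> q U)) = ?L'"
  proof -
    have "ccomp C (umor ?L) (umor (\<gamma> q U)) =
          ccomp C (umor (\<beta>' (\<pi> q))) (ccomp C (umor (amor B (\<pi> q) g)) (umor (\<gamma> q U)))"
      using facts by (simp add: CG.hom_iff DB.hom_iff)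
    also have "\<dots> = ccomp C (umor (\<beta>' (\<pi> q))) (ccomp C (umor (\<gamma> q V)) (amor A q (umor g)))"
      by (simp only: nat)
    also have "\<dots> = ?L'"
      using facts by (simp add: CG.hom_iff lift_structure_def)
    finally show ?thesis .
  qed
  have Ri: "ccomp C (umor ?R) (umor (\<gamma> q U)) = ?R'"
    using facts by (simp add: CG.hom_iff lift_structure_def)
  have "?L = ?R \<longleftrightarrow> umor ?L = umor ?R"
    by (rule CN.eqv_arrow_eq_iff[OF L R])
  also have "\<dots> \<longleftrightarrow> ccomp C (umor ?L) (umor (\<gamma> q U)) = ccomp C (umor ?R) (umor (\<gamma> q U))"
    using umor_D_hom[OF L] umor_D_hom[OF R] facts by (simp add: CG.iso_cancel_right CG.hom_iff)
  finally show ?thesis using Li Ri by simp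
qed

definition desc_obj :: "('g, 'o, 'm) eqv_ob \<Rightarrow> (('g, 'o, 'm) eqv_ob \<times> ('h \<Rightarrow> ('g, 'o, 'm) eqv_ar))" where
  "desc_obj Xa = (res_obj Xa, restrict (descend Xa) (carrier G''))"

definition lift_obj :: "(('g, 'o, 'm) eqv_ob \<times> ('h \<Rightarrow> ('g, 'o, 'm) eqv_ar)) \<Rightarrow> ('g, 'o, 'm) eqv_ob" where
  "lift_obj Xb = (fst (fst Xb), restrict (lift_structure (fst Xb) (snd Xb)) (carrier G))"

lemma DG_obj_parts:
  assumes "DG_obj Xb"
  shows "fst Xb \<in> cobj D" "snd Xb \<in> extensional (carrier G'')"
    "\<And>h. h \<in> carrier G'' \<Longrightarrow> snd Xb h \<in> chom D (aobj B h (fst Xb)) (fst Xb) \<and> is_iso D (snd Xb h)"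
    "snd Xb \<one>\<^bsub>G''\<^esub> = aunit B (fst Xb)"
    "\<And>h2 h1. h2 \<in> carrier G'' \<Longrightarrow> h1 \<in> carrier G'' \<Longrightarrow>
       ccomp D (snd Xb h2) (amor B h2 (snd Xb h1)) = ccomp D (snd Xb (h2 \<otimes>\<^bsub>G''\<^esub> h1)) (amult B h2 h1 (fst Xb))"
  using assms unfolding eqv_obj_iff by blast+

lemma descend_unit:
  assumes Xa: "CG_obj Xa"
  shows "descend Xa \<one>\<^bsub>G''\<^esub> = aunit B (res_obj Xa)"
  using lift_unit_iff[where \<beta> = "descend Xa", OF res_obj_D[OF Xa] conjunct1[OF descend_hom[OF Xa one_G'']]]
    lift_structure_descend[OF Xa one_G] CG_obj_parts(4)[OF Xa] by simp

lemma descend_cocycle: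
  assumes Xa: "CG_obj Xa" and h: "h2 \<in> carrier G''" "h1 \<in> carrier G''"
  shows "ccomp D (descend Xa h2) (amor B h2 (descend Xa h1)) =
         ccomp D (descend Xa (h2 \<otimes>\<^bsub>G''\<^esub> h1)) (amult B h2 h1 (res_obj Xa))"
proof -
  let ?U = "res_obj Xa" and ?q1 = "pi_section h1" and ?q2 = "pi_section h2"
  have q: "?q1 \<in> carrier G" "?q2 \<in> carrier G" "\<pi> ?q1 = h1" "\<pi> ?q2 = h2" using h by simp_all
  have \<beta>: "\<And>h. h \<in> carrier G'' \<Longrightarrow> descend Xa h \<in> chom D (aobj B h ?U) ?U"
    using descend_hom[OF Xa] by blast
  have "ccomp C (lift_structure ?U (descend Xa) ?q2) (amor A ?q2 (lift_structure ?U (descend Xa) ?q1)) =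
        ccomp C (lift_structure ?U (descend Xa) (?q2 \<otimes>\<^bsub>G\<^esub> ?q1)) (amult A ?q2 ?q1 (fst ?U))"
    using CG_obj_parts(5)[OF Xa, of ?q2 ?q1] lift_structure_descend[OF Xa] q by simp
  then have "ccomp D (descend Xa (\<pi> ?q2)) (amor B (\<pi> ?q2) (descend Xa (\<pi> ?q1))) =
             ccomp D (descend Xa (\<pi> ?q2 \<otimes>\<^bsub>G''\<^esub> \<pi> ?q1)) (amult B (\<pi> ?q2) (\<pi> ?q1) ?U)"
    using lift_cocycle_iff[where \<beta> = "descend Xa", OF res_obj_D[OF Xa] \<beta> q(1,2)] by blast
  then show ?thesis by (simp only: q(3,4))
qed

lemma desc_obj_DG:
  assumes Xa: "CG_obj Xa"
  shows "DG_obj (desc_obj Xa)"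
  unfolding eqv_obj_iff desc_obj_def fst_conv snd_conv
proof (intro conjI ballI)
  show "res_obj Xa \<in> cobj D" by (rule res_obj_D[OF Xa])
  show "restrict (descend Xa) (carrier G'') \<in> extensional (carrier G'')" by simp
  show "restrict (descend Xa) (carrier G'') \<one>\<^bsub>G''\<^esub> = aunit B (res_obj Xa)"
    using descend_unit[OF Xa] by simp
  fix h assume h: "h \<in> carrier G''"
  show "restrict (descend Xa) (carrier G'') h \<in> chom D (aobj B h (res_obj Xa)) (res_obj Xa)"
    "is_iso D (restrict (descend Xa) (carrier G'') h)"
    using descend_hom[OF Xa h] h by simp_all
next
  fix h2 h1 assume "h2 \<in> carrier G''" "h1 \<in> carrier G''"
  then show "ccomp D (restrict (descend Xa) (carrier G'') h2)
               (amor B h2 (restrict (descend Xa) (carrier G'') h1)) =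
             ccomp D (restrict (descend Xa) (carrier G'') (h2 \<otimes>\<^bsub>G''\<^esub> h1)) (amult B h2 h1 (res_obj Xa))"
    by (simp only: restrict_apply' mult_G'' descend_cocycle[OF Xa])
qed

lemma lift_obj_CG:
  assumes Xb: "DG_obj Xb"
  shows "CG_obj (lift_obj Xb)"
proof -
  note P = DG_obj_parts[OF Xb]
  let ?U = "fst Xb" and ?\<alpha> = "lift_structure (fst Xb) (snd Xb)"
  have U: "?U \<in> cobj D" by (rule P(1))
  have \<beta>: "\<And>h. h \<in> carrier G'' \<Longrightarrow> snd Xb h \<in> chom D (aobj B h ?U) ?U"
    using P(3) by blast
  have unit: "?\<alpha> \<one>\<^bsub>G\<^esub> = aunit A (fst ?U)"
    using lift_unit_iff[where \<beta> = "snd Xb", OF U \<beta>[OF one_G'']] P(4) by simp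
  have cocycle: "ccomp C (?\<alpha> q2) (amor A q2 (?\<alpha> q1)) = ccomp C (?\<alpha> (q2 \<otimes>\<^bsub>G\<^esub> q1)) (amult A q2 q1 (fst ?U))"
    if q: "q2 \<in> carrier G" "q1 \<in> carrier G" for q2 q1
    by (rule iffD1[OF lift_cocycle_iff[where \<beta> = "snd Xb", OF U \<beta> q(2,1)] P(5)[of "\<pi> q2" "\<pi> q1"]])
       (use q in simp_all)
  show ?thesis unfolding eqv_obj_iff lift_obj_def fst_conv snd_conv
  proof (intro conjI ballI)
    show "fst ?U \<in> cobj C" using U by simp
    show "restrict ?\<alpha> (carrier G) \<in> extensional (carrier G)" by simp
    show "restrict ?\<alpha> (carrier G) \<one>\<^bsub>G\<^esub> = aunit A (fst ?U)" using unit by simp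
    fix q assume q: "q \<in> carrier G"
    show "restrict ?\<alpha> (carrier G) q \<in> chom C (aobj A q (fst ?U)) (fst ?U)" "is_iso C (restrict ?\<alpha> (carrier G) q)"
      using lift_structure_hom[OF U q] P(3)[of "\<pi> q"] q by simp_all
  next
    fix q2 q1 assume "q2 \<in> carrier G" "q1 \<in> carrier G"
    then show "ccomp C (restrict ?\<alpha> (carrier G) q2) (amor A q2 (restrict ?\<alpha> (carrier G) q1)) =
               ccomp C (restrict ?\<alpha> (carrier G) (q2 \<otimes>\<^bsub>G\<^esub> q1)) (amult A q2 q1 (fst ?U))"
      using cocycle by simp
  qed
qed

lemma lift_desc_obj:
  assumes Xa: "CG_obj Xa"
  shows "lift_obj (desc_obj Xa) = Xa"
proof -
  have "restrict (lift_structure (res_obj Xa) (restrict (descend Xa) (carrier G''))) (carrier G) = snd Xa"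
  proof (rule extensionalityI[OF _ CG_obj_parts(2)[OF Xa]])
    fix q assume q: "q \<in> carrier G"
    then show "restrict (lift_structure (res_obj Xa) (restrict (descend Xa) (carrier G''))) (carrier G) q = snd Xa q"
      using lift_structure_descend[OF Xa q] by (simp add: lift_structure_def)
  qed simp
  then show ?thesis
    unfolding lift_obj_def desc_obj_def fst_conv snd_conv res_obj_fst by (simp only: prod.collapse)
qed

lemma res_lift_obj:
  assumes Xb: "DG_obj Xb"
  shows "res_obj (lift_obj Xb) = fst Xb"
proof -
  note P = DG_obj_parts[OF Xb]
  have "restrict (snd (lift_obj Xb)) N = snd (fst Xb)"
  proof (rule extensionalityI)
    show "snd (fst Xb) \<in> extensional N"
      using P(1) unfolding eqv_cat_simps mem_Collect_eq eqv_obj_iff by blast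
    fix n assume n: "n \<in> N"
    then have "snd (lift_obj Xb) n = ccomp C (umor (aunit B (fst Xb))) (umor (\<gamma> n (fst Xb)))"
      using P(4) by (simp add: lift_obj_def lift_structure_def in_N_iff)
    then show "restrict (snd (lift_obj Xb)) N n = snd (fst Xb) n"
      using gamma_trivial[OF n P(1)] n by simp
  qed simp
  then show ?thesis
    unfolding res_obj_def lift_obj_def fst_conv by (simp only: prod.collapse)
qed

lemma desc_lift_obj:
  assumes Xb: "DG_obj Xb"
  shows "desc_obj (lift_obj Xb) = Xb"
proof -
  note P = DG_obj_parts[OF Xb]
  have Xa: "CG_obj (lift_obj Xb)" by (rule lift_obj_CG[OF Xb])
  have res: "res_obj (lift_obj Xb) = fst Xb" by (rule res_lift_obj[OF Xb])
  have "restrict (descend (lift_obj Xb)) (carrier G'') = snd Xb"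
  proof (rule extensionalityI[OF _ P(2)])
    fix h assume h: "h \<in> carrier G''"
    let ?s = "pi_section h"
    have s: "?s \<in> carrier G" "\<pi> ?s = h" using h by simp_all
    have \<beta>C: "umor (snd Xb h) \<in> chom C (fst (aobj B h (fst Xb))) (fst (fst Xb))"
      using umor_D_hom P(3)[OF h] by blast
    have umor_eq: "umor (descend (lift_obj Xb) h) = umor (snd Xb h)"
      using umor_descend[OF Xa h] s \<beta>C P(1) res
      by (simp add: lift_obj_def lift_structure_def CG.hom_iff)
    have "descend (lift_obj Xb) h \<in> chom D (aobj B h (fst Xb)) (fst Xb)"
      using descend_hom[OF Xa h] res by simp
    then have "descend (lift_obj Xb) h = snd Xb h"
      using CN.eqv_arrow_eq_iff conjunct1[OF P(3)[OF h]] umor_eq by blast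
    then show "restrict (descend (lift_obj Xb)) (carrier G'') h = snd Xb h"
      using h by simp
  qed simp
  then show ?thesis
    unfolding desc_obj_def res by (simp only: prod.collapse)
qed

definition desc_arr ::
  "('g, 'o, 'm) eqv_ar \<Rightarrow> (('g, 'o, 'm) eqv_ob \<times> ('h \<Rightarrow> ('g, 'o, 'm) eqv_ar)) \<times>
     (('g, 'o, 'm) eqv_ob \<times> ('h \<Rightarrow> ('g, 'o, 'm) eqv_ar)) \<times> ('g, 'o, 'm) eqv_ar" where
  "desc_arr f = (desc_obj (fst f), desc_obj (fst (snd f)), (res_obj (fst f), res_obj (fst (snd f)), umor f))"

definition lift_arr ::
  "(('g, 'o, 'm) eqv_ob \<times> ('h \<Rightarrow> ('g, 'o, 'm) eqv_ar)) \<times>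
     (('g, 'o, 'm) eqv_ob \<times> ('h \<Rightarrow> ('g, 'o, 'm) eqv_ar)) \<times> ('g, 'o, 'm) eqv_ar \<Rightarrow> ('g, 'o, 'm) eqv_ar" where
  "lift_arr f = (lift_obj (fst f), lift_obj (fst (snd f)), umor (umor f))"

lemma desc_arr_carr:
  assumes f: "f \<in> carr CG.E"
  shows "desc_arr f \<in> carr DB.E"
proof -
  let ?X = "fst f" and ?Y = "fst (snd f)" and ?\<phi> = "umor f"
  have X: "CG_obj ?X" and Y: "CG_obj ?Y" and \<phi>: "?\<phi> \<in> chom C (fst ?X) (fst ?Y)"
    and compat: "\<And>q. q \<in> carrier G \<Longrightarrow> ccomp C (snd ?Y q) (amor A q ?\<phi>) = ccomp C ?\<phi> (snd ?X q)"
    using f unfolding eqv_carr_iff by blast+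
  let ?g = "(res_obj ?X, res_obj ?Y, ?\<phi>)"
  have g: "?g \<in> chom D (res_obj ?X) (res_obj ?Y)"
    using res_obj_D[OF X] res_obj_D[OF Y] \<phi> compat unfolding chom_def eqv_carr_iff by simp
  have natural: "ccomp D (descend ?Y h) (amor B h ?g) = ccomp D ?g (descend ?X h)"
    if h: "h \<in> carrier G''" for h
  proof -
    let ?q = "pi_section h"
    have q: "?q \<in> carrier G" "\<pi> ?q = h" using h by simp_all
    have bX: "descend ?X (\<pi> ?q) \<in> chom D (aobj B (\<pi> ?q) (res_obj ?X)) (res_obj ?X)"
      and bY: "descend ?Y (\<pi> ?q) \<in> chom D (aobj B (\<pi> ?q) (res_obj ?Y)) (res_obj ?Y)"
      using descend_hom[OF X h] descend_hom[OF Y h] q by simp_all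
    have "ccomp C (lift_structure (res_obj ?Y) (descend ?Y) ?q) (amor A ?q (umor ?g)) =
          ccomp C (umor ?g) (lift_structure (res_obj ?X) (descend ?X) ?q)"
      using compat[OF q(1)] lift_structure_descend[OF X q(1)] lift_structure_descend[OF Y q(1)] by simp
    then have "ccomp D (descend ?Y (\<pi> ?q)) (amor B (\<pi> ?q) ?g) = ccomp D ?g (descend ?X (\<pi> ?q))"
      using lift_natural_iff[where \<beta> = "descend ?X" and \<beta>' = "descend ?Y", OF g q(1) bX bY] by blast
    then show ?thesis by (simp only: q(2))
  qed
  show ?thesis unfolding eqv_carr_iff desc_arr_def fst_conv snd_conv
  proof (intro conjI ballI)
    show "DG_obj (desc_obj ?X)" "DG_obj (desc_obj ?Y)" using desc_obj_DG X Y by blast+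
    show "?g \<in> chom D (fst (desc_obj ?X)) (fst (desc_obj ?Y))" using g by (simp add: desc_obj_def)
    fix h assume "h \<in> carrier G''"
    then show "ccomp D (snd (desc_obj ?Y) h) (amor B h ?g) = ccomp D ?g (snd (desc_obj ?X) h)"
      unfolding desc_obj_def snd_conv by (simp only: restrict_apply' natural)
  qed
qed

lemma lift_arr_carr:
  assumes f: "f \<in> carr DB.E"
  shows "lift_arr f \<in> carr CG.E"
proof -
  let ?X = "fst f" and ?Y = "fst (snd f)" and ?g = "umor f"
  have X: "DG_obj ?X" and Y: "DG_obj ?Y" and g: "?g \<in> chom D (fst ?X) (fst ?Y)"
    and compat: "\<And>h. h \<in> carrier G'' \<Longrightarrow> ccomp D (snd ?Y h) (amor B h ?g) = ccomp D ?g (snd ?X h)"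
    using f unfolding eqv_carr_iff by blast+
  have natural: "ccomp C (lift_structure (fst ?Y) (snd ?Y) q) (amor A q (umor ?g)) =
                 ccomp C (umor ?g) (lift_structure (fst ?X) (snd ?X) q)"
    if q: "q \<in> carrier G" for q
  proof -
    have "\<pi> q \<in> carrier G''" using q by simp
    then show ?thesis
      using lift_natural_iff[where \<beta> = "snd ?X" and \<beta>' = "snd ?Y", OF g q]
        DG_obj_parts(3)[OF X] DG_obj_parts(3)[OF Y] compat by blast
  qed
  show ?thesis unfolding eqv_carr_iff lift_arr_def fst_conv snd_conv
  proof (intro conjI ballI)
    show "CG_obj (lift_obj ?X)" "CG_obj (lift_obj ?Y)" using lift_obj_CG X Y by blast+
    show "umor ?g \<in> chom C (fst (lift_obj ?X)) (fst (lift_obj ?Y))"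
      using umor_D_hom[OF g] by (simp add: lift_obj_def)
    fix q assume "q \<in> carrier G"
    then show "ccomp C (snd (lift_obj ?Y) q) (amor A q (umor ?g)) = ccomp C (umor ?g) (snd (lift_obj ?X) q)"
      using natural by (simp add: lift_obj_def)
  qed
qed

lemma desc_functor: "is_functor CG.E DB.E desc_obj desc_arr"
  unfolding is_functor_def
proof (intro conjI ballI impI)
  fix f assume "f \<in> carr CG.E"
  then show "desc_arr f \<in> chom DB.E (desc_obj (cdom CG.E f)) (desc_obj (ccod CG.E f))"
    using desc_arr_carr unfolding chom_def by (simp add: desc_arr_def)
qed (use desc_obj_DG in \<open>auto simp: desc_arr_def desc_obj_def\<close>)

lemma lift_functor: "is_functor DB.E CG.E lift_obj lift_arr"
  unfolding is_functor_def
proof (intro conjI ballI impI)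
  fix f assume "f \<in> carr DB.E"
  then show "lift_arr f \<in> chom CG.E (lift_obj (cdom DB.E f)) (lift_obj (ccod DB.E f))"
    using lift_arr_carr unfolding chom_def by (simp add: lift_arr_def)
qed (use lift_obj_CG in \<open>auto simp: lift_arr_def lift_obj_def\<close>)

lemma lift_desc_arr: "f \<in> carr CG.E \<Longrightarrow> lift_arr (desc_arr f) = f"
  by (simp add: lift_arr_def desc_arr_def eqv_carr_iff lift_desc_obj)

lemma desc_lift_arr:
  assumes f: "f \<in> carr DB.E"
  shows "desc_arr (lift_arr f) = f"
proof -
  have X: "DG_obj (fst f)" and Y: "DG_obj (fst (snd f))"
    and g: "umor f \<in> chom D (fst (fst f)) (fst (fst (snd f)))"
    using f unfolding eqv_carr_iff by blast+
  have "umor f = (fst (fst f), fst (fst (snd f)), umor (umor f))"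
    using g unfolding chom_def by (cases "umor f") auto
  then show ?thesis
    using desc_lift_obj[OF X] desc_lift_obj[OF Y] res_lift_obj[OF X] res_lift_obj[OF Y]
    by (simp add: lift_arr_def desc_arr_def)
qed

theorem equivariant_categories_equivalent: "cat_equivalent CG.E DB.E"
  by (rule cat_equivalent_if_inverse_functors[OF CG.eqv_cat_is_category DB.eqv_cat_is_category
        desc_functor lift_functor])
     (simp_all add: lift_desc_obj lift_desc_arr desc_lift_obj desc_lift_arr)

end

theorem mainTheorem4:
  fixes G :: "('g, 'b) monoid_scheme" and G'' :: "('h, 'c) monoid_scheme"
    and \<pi> :: "'g \<Rightarrow> 'h" and N :: "'g set"
    and C :: "('o, 'm) category" and A :: "('g, 'o, 'm) cat_action"
    and B :: "('h, ('g, 'o, 'm) eqv_ob, ('g, 'o, 'm) eqv_ar) cat_action"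
    and \<gamma> :: "'g \<Rightarrow> ('g, 'o, 'm) eqv_ob \<Rightarrow> ('g, 'o, 'm) eqv_ar"
  assumes "group G" and "group G''"
    and "\<pi> \<in> hom G G''" and "\<pi> ` carrier G = carrier G''"
    and "N \<lhd> G" and "kernel G G'' \<pi> = N"
    and "is_category C"
    and "is_action G C A"
    and "is_action G'' (eqv_cat G N C A) B"
    and "is_action_iso G (eqv_cat G N C A) (canon_action G N C A) (pullback_action \<pi> B) \<gamma>"
    and "restricts_to_canonical_trivialization G N C A B \<gamma>"
  shows "cat_equivalent (eqv_cat G (carrier G) C A) (eqv_cat G'' (carrier G'') (eqv_cat G N C A) B)"
proof -
  interpret extension_action G G'' \<pi> N C A B \<gamma> by (rule extension_action.intro[OF assms])
  show ?thesis by (rule equivariant_categories_equivalent)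
qed

end
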